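(* Let $\mu$ be a super-strict partition with $|\mu|\ge 2$, and let $\tau=(\mu_1-1,\mu_2,\mu_3,\ldots)$, so that $\mu=\tau+(1)$. Then $$\Theta_\mu\!\left(\frac{zt}{1-zt}\right)=F_{\tau}(z,1)+F_{\tau,\mu}(z,t).$$ In particular $F_\mu(z,1)=\left.\Theta_\mu\!\left(\frac{zt}{1-zt}\right)\right|_{t=1}$, i.e. $\sum_{n\ge1}|\mathrm{Av}_n(\mu)|z^n$ equals this specialization.
   Context: A partition is a weakly decreasing sequence $\alpha_1\ge\alpha_2\ge\cdots$ of nonnegative integers with finitely many nonzero terms (its parts); its weight is $|\alpha|=\sum_i\alpha_i$. A partition is identified with its Ferrers board (row $i$ has $\alpha_i$ boxes, rows top- and left-justified). A partition $\alpha$ contains $\mu$ if one can delete some set of rows and some set of columns from the Ferrers board of $\alpha$ so that, after top/left-justifying the remaining boxes, one obtains the Ferrers board of $\mu$; otherwise $\alpha$ avoids $\mu$. $\mathrm{Av}_n(\mu)$ is the set of partitions of weight $n$ avoiding $\mu$. A partition is strict if its positive parts are distinct, and super-strict if any two of its positive parts differ by at least $2$. For partitions $\alpha,\beta$, $\alpha+\beta=(\alpha_1+\beta_1,\alpha_2+\beta_2,\ldots)$; $(w^m)$ denotes the partition with $m$ parts equal to $w$. $m(\alpha)$ is the multiplicity of the largest part $\alpha_1$ in $\alpha$. For partitions $\tau,\mu$, $\mathcal Q(\tau,\mu)$ is the set of partitions of positive weight that contain $\tau$ and avoid $\mu$. For a set $S$ of partitions, $F_S(z,t)=\sum_{\alpha\in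 S}z^{|\alpha|}t^{m(\alpha)}$ ($F_\emptyset=0$); $F_\mu(z,t)$ denotes $F_S$ for $S$ the set of partitions of positive weight avoiding $\mu$, and $F_{\tau,\mu}(z,t)=F_{\mathcal Q(\tau,\mu)}(z,t)$. Operators on series $G(z,t)=\sum_{n\ge1}\sum_{m\ge0}a_{n,m}z^nt^m$: $\mathcal E G(z,t)=\dfrac{G(z,1)-ztG(z,zt)}{1-zt}$, and $\mathcal N G(z,t)=G(z,0)+\sum_{n\ge1}\sum_{m\ge1}a_{n,m}\dfrac{1}{1-z^m}\cdot\dfrac{1-(tz)^m}{1-tz}z^n$. The southeast border of a partition $\mu$ is the lattice path of unit east and north steps from the bottom-left to the top-right corner of its Ferrers board tracing the bottoms of the columns and right ends of the rows. For strict $\mu$ every north step other than the last is immediately followed by an east step; such a pair is called a north-east step, so the border is read as: an initial east step, then a sequence of east and north-east steps, then a final north step. For super-strict $\mu$ of weight $\ge2$, $\Theta_\mu$ is the sequence of symbols obtained by reading this border from bottom-left to top-right, ignoring the initial east step and the final east step followed by the final north step, and recording each east step as $\mathcal E$ and each north-east step as $\mathcal N$ (e.g. $\Theta_{(8,5,3)}=(\mathcal E,\mathcal E,\mathcal N,\mathcal E,\mathcal N,\mathcal E)$, $\Theta_{(2)}=\emptyset$). For $\Theta=(\Theta_1,\ldots,\Theta_r)$, $\Theta G=\Theta_r\circ\cdots\circ\Theta_1 G$, and $\emptyset G=G$. *)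

theory Defs
  imports Main "HOL-Computational_Algebra.Polynomial" "HOL-Computational_Algebra.Formal_Power_Series"
begin

definition is_partition :: "nat list \<Rightarrow> bool" where
  "is_partition \<alpha> \<longleftrightarrow> sorted (rev \<alpha>) \<and> 0 \<notin> set \<alpha>"

definition weight :: "nat list \<Rightarrow> nat" where
  "weight \<alpha> = sum_list \<alpha>"

definition super_strict :: "nat list \<Rightarrow> bool" where
  "super_strict \<mu> \<longleftrightarrow> (\<forall>i. i + 1 < length \<mu> \<longrightarrow> \<mu> ! (i+1) + 2 \<le> \<mu> ! i)"

text \<open>Containment: keep a set R of rows and a set C of columns of the Ferrers board of alpha;
  the kept part of row i has card (C \<inter> {..<alpha!i}) boxes after left-justification;
  top-justification removes the emptied rows.\<close>

definition contains :: "nat list \<Rightarrow> nat list \<Rightarrow> bool" where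
  "contains \<alpha> \<mu> \<longleftrightarrow> (\<exists>R C. R \<subseteq> {..<length \<alpha>} \<and>
      filter (\<lambda>x. 0 < x) (map (\<lambda>i. card (C \<inter> {..<\<alpha> ! i})) (sorted_list_of_set R)) = \<mu>)"

definition avoids :: "nat list \<Rightarrow> nat list \<Rightarrow> bool" where
  "avoids \<alpha> \<mu> \<longleftrightarrow> \<not> contains \<alpha> \<mu>"

definition Av :: "nat \<Rightarrow> nat list \<Rightarrow> nat list set" where
  "Av n \<mu> = {\<alpha>. is_partition \<alpha> \<and> weight \<alpha> = n \<and> avoids \<alpha> \<mu>}"

definition mlarge :: "nat list \<Rightarrow> nat" where
  "mlarge \<alpha> = length (filter (\<lambda>x. x = hd \<alpha>) \<alpha>)"

definition AvSet :: "nat list \<Rightarrow> nat list set" where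
  "AvSet \<mu> = {\<alpha>. is_partition \<alpha> \<and> 0 < weight \<alpha> \<and> avoids \<alpha> \<mu>}"

definition QSet :: "nat list \<Rightarrow> nat list \<Rightarrow> nat list set" where
  "QSet \<tau> \<mu> = {\<alpha>. is_partition \<alpha> \<and> 0 < weight \<alpha> \<and> contains \<alpha> \<tau> \<and> avoids \<alpha> \<mu>}"

text \<open>A series G(z,t) whose z^n-coefficient is a polynomial in t is an element of
  int poly fps: the n-th coefficient is the polynomial in t.\<close>

type_synonym bser = "int poly fps"

definition Tvar :: bser where "Tvar = fps_const [:0, 1 :]"

definition Fser :: "nat list set \<Rightarrow> bser" where
  "Fser S = Abs_fps (\<lambda>n. \<Sum>\<alpha>\<in>{\<alpha>\<in>S. is_partition \<alpha> \<and> weight \<alpha> = n}. monom 1 (mlarge \<alpha>))"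

text \<open>G(z,1), G(z,0), and G(z,zt)\<close>
definition at_t1 :: "bser \<Rightarrow> bser" where
  "at_t1 G = Abs_fps (\<lambda>n. [:poly (fps_nth G n) 1 :])"

definition at_t0 :: "bser \<Rightarrow> bser" where
  "at_t0 G = Abs_fps (\<lambda>n. [:poly (fps_nth G n) 0 :])"

definition at_zt :: "bser \<Rightarrow> bser" where
  "at_zt G = Abs_fps (\<lambda>k. \<Sum>n\<le>k. monom (coeff (fps_nth G n) (k - n)) (k - n))"

text \<open>1/f for a series with constant coefficient 1\<close>
definition inv1 :: "bser \<Rightarrow> bser" where
  "inv1 f = fps_right_inverse f 1"

definition opE :: "bser \<Rightarrow> bser" where
  "opE G = (at_t1 G - Tvar * fps_X * at_zt G) * inv1 (1 - Tvar * fps_X)"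

definition Nterm :: "int \<Rightarrow> nat \<Rightarrow> nat \<Rightarrow> bser" where
  "Nterm a n m = fps_const [:a :] * inv1 (1 - fps_X ^ m) * (1 - (Tvar * fps_X) ^ m)
      * inv1 (1 - Tvar * fps_X) * fps_X ^ n"

text \<open>The double sum over n \<ge> 1, m \<ge> 1 is formally convergent since the (n,m) term has
  z-order \<ge> n and a_{n,m} = 0 for m > degree (fps_nth G n); we write it coefficientwise.\<close>
definition opN :: "bser \<Rightarrow> bser" where
  "opN G = at_t0 G + Abs_fps (\<lambda>k. \<Sum>n\<in>{1..k}. \<Sum>m\<in>{1..degree (fps_nth G n)}.
      fps_nth (Nterm (coeff (fps_nth G n) m) n m) k)"

datatype step = East | North

definition border :: "nat list \<Rightarrow> step list" where
  "border \<mu> = concat (map (\<lambda>i. replicate (\<mu> ! i - (if i + 1 < length \<mu> then \<mu> ! (i+1) else 0)) East @ [North])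
                    (rev [0..<length \<mu>]))"

datatype theta_op = OpE | OpN

fun tokens :: "step list \<Rightarrow> theta_op list" where
  "tokens [] = []"
| "tokens (East # xs) = OpE # tokens xs"
| "tokens (North # East # xs) = OpN # tokens xs"
| "tokens (North # xs) = []"

text \<open>ignore the initial east step and the final east step followed by the final north step\<close>
definition Theta :: "nat list \<Rightarrow> theta_op list" where
  "Theta \<mu> = tokens (butlast (butlast (tl (border \<mu>))))"

definition apply_op :: "theta_op \<Rightarrow> bser \<Rightarrow> bser" where
  "apply_op p G = (case p of OpE \<Rightarrow> opE G | OpN \<Rightarrow> opN G)"

definition apply_Theta :: "theta_op list \<Rightarrow> bser \<Rightarrow> bser" where
  "apply_Theta \<Theta> G = foldl (\<lambda>H p. apply_op p H) G \<Theta>"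

lemma "Theta [8,5,3] = [OpE, OpE, OpN, OpE, OpN, OpE]"
  by (simp add: Theta_def border_def upt_rec numeral_eq_Suc)
lemma "Theta [2] = []"
  by (simp add: Theta_def border_def upt_rec numeral_eq_Suc)

end

theory Submission
  imports Defs
begin

text \<open>
  For \<open>\<mu> = \<tau> + (1)\<close> let \<open>G(\<tau>,\<mu>) = F\<^sub>\<tau>(z,1) + F\<^sub>\<tau>\<^sub>,\<^sub>\<mu>(z,t)\<close> (\<open>Fsplit \<tau> \<mu>\<close> below). The theorem follows by
  induction along the border of \<open>\<mu>\<close>, starting from \<open>G((1),(2)) = zt/(1-zt)\<close>: the partitions containing
  \<open>(1)\<close> but avoiding \<open>(2)\<close> are the \<open>(1\<^sup>n)\<close>.
  An east step replaces \<open>\<mu> = (a,\<rho>)\<close> by \<open>(a+1,\<rho>)\<close>. Raising the \<open>j\<close> largest parts of a partition by one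
  column maps those containing \<open>\<tau>\<close> but avoiding \<open>\<mu>\<close> whose largest part occurs at least \<open>j\<close> times
  onto those containing \<open>\<mu>\<close> but avoiding \<open>(a+1,\<rho>)\<close> whose largest part occurs exactly \<open>j\<close> times;
  on generating functions this is \<open>\<E>\<close>.
  A north-east step passes from \<open>(b+1,\<rho>)\<close> to \<open>(b+2,b,\<rho>)\<close>. The partitions containing \<open>(b,\<rho>)\<close> but
  avoiding \<open>(b+1,b,\<rho>)\<close> arise exactly once by lifting the block of largest parts of a partition
  containing \<open>(b,\<rho>)\<close> but avoiding \<open>(b+1,\<rho>)\<close> by some multiple of its size; together with a one-column
  raising as before this gives \<open>\<N>\<close>.
  All these bijections rest on one test: a partition \<open>(L\<^sup>m,\<rho>)\<close> whose other parts \<open>\<rho>\<close> are at most \<open>L\<close>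
  contains a strictly decreasing \<open>(t,\<sigma>)\<close> iff a row of length \<open>L\<close> can keep \<open>t\<close> boxes while \<open>\<sigma>\<close> is cut
  from the parts of \<open>\<rho>\<close>.
\<close>

unbundle fps_syntax

section \<open>Containment of partitions, row by row\<close>

text \<open>Reading a containment row by row: a part \<open>v\<close> that keeps \<open>t\<close> boxes loses \<open>v - t\<close> columns,
  and a lower (hence shorter) row can lose at most as many. \<open>fits S \<sigma> e\<close> says that the parts \<open>\<sigma>\<close>
  can be cut, in order, from parts in \<open>S\<close> when the first row may lose at most \<open>e\<close> columns.\<close>

fun fits :: "nat set \<Rightarrow> nat list \<Rightarrow> nat \<Rightarrow> bool" where
  "fits S [] e = True"
| "fits S (t # \<sigma>) e = (\<exists>v\<in>S. t \<le> v \<and> v - t \<le> e \<and> fits S \<sigma> (v - t))"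

definition hd0 :: "nat list \<Rightarrow> nat" where
  "hd0 xs = (case xs of [] \<Rightarrow> 0 | t # _ \<Rightarrow> t)"

definition kept :: "nat set \<Rightarrow> nat \<Rightarrow> nat" where
  "kept C a = card (C \<inter> {..<a})"

lemma kept_le: "kept C a \<le> a"
proof -
  have "card (C \<inter> {..<a}) \<le> card {..<a}" by (rule card_mono) auto
  thus ?thesis by (simp add: kept_def)
qed

lemma kept_le_add_diff: assumes "b \<le> a" shows "kept C a \<le> kept C b + (a - b)"
proof -
  have "C \<inter> {..<a} \<subseteq> (C \<inter> {..<b}) \<union> {b..<a}" by auto
  hence "card (C \<inter> {..<a}) \<le> card ((C \<inter> {..<b}) \<union> {b..<a})" by (intro card_mono) auto
  also have "\<dots> \<le> card (C \<inter> {..<b}) + card {b..<a}" by (rule card_Un_le)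
  finally show ?thesis by (simp add: kept_def)
qed

lemma fits_mono: "fits S \<sigma> e \<Longrightarrow> e \<le> e' \<Longrightarrow> fits S \<sigma> e'"
  by (induction \<sigma> arbitrary: e) auto

lemma fits_kept_rows:
  assumes "sorted_wrt (<) js" "set js \<subseteq> {..<length \<alpha>}" "sorted (rev \<alpha>)"
    "\<forall>i\<in>set js. \<alpha>!i - kept C (\<alpha>!i) \<le> e"
  shows "fits (set \<alpha>) (map (\<lambda>i. kept C (\<alpha>!i)) js) e"
  using assms
proof (induction js arbitrary: e)
  case Nil then show ?case by simp
next
  case (Cons i0 js)
  have i0: "i0 < length \<alpha>" using Cons.prems by auto
  have "fits (set \<alpha>) (map (\<lambda>i. kept C (\<alpha>!i)) js) (\<alpha>!i0 - kept C (\<alpha>!i0))"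
  proof (rule Cons.IH)
    show "sorted_wrt (<) js" "set js \<subseteq> {..<length \<alpha>}" "sorted (rev \<alpha>)" using Cons.prems by auto
    show "\<forall>i\<in>set js. \<alpha> ! i - kept C (\<alpha> ! i) \<le> \<alpha> ! i0 - kept C (\<alpha> ! i0)"
    proof
      fix i assume "i \<in> set js"
      hence "i0 < i" "i < length \<alpha>" using Cons.prems by auto
      hence le: "\<alpha>!i \<le> \<alpha>!i0" using sorted_rev_nth_mono[OF Cons.prems(3)] by auto
      have "kept C (\<alpha>!i0) \<le> kept C (\<alpha>!i) + (\<alpha>!i0 - \<alpha>!i)" by (rule kept_le_add_diff[OF le])
      moreover have "kept C (\<alpha>!i) \<le> \<alpha>!i" by (rule kept_le)
      ultimately show "\<alpha> ! i - kept C (\<alpha> ! i) \<le> \<alpha> ! i0 - kept C (\<alpha> ! i0)" using le by linarith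
    qed
  qed
  moreover have "\<alpha>!i0 \<in> set \<alpha>" using i0 by simp
  moreover have "kept C (\<alpha>!i0) \<le> \<alpha>!i0" by (rule kept_le)
  moreover have "\<alpha>!i0 - kept C (\<alpha>!i0) \<le> e" using Cons.prems by auto
  ultimately show ?case by auto
qed

lemma contains_imp_fits:
  assumes "is_partition \<alpha>" "contains \<alpha> \<tau>"
  shows "\<exists>e. fits (set \<alpha>) \<tau> e"
proof -
  from assms(2) obtain R C where R: "R \<subseteq> {..<length \<alpha>}"
    and f: "filter (\<lambda>x. 0 < x) (map (\<lambda>i. card (C \<inter> {..<\<alpha> ! i})) (sorted_list_of_set R)) = \<tau>"
    unfolding contains_def by blast
  define js where "js = filter (\<lambda>i. 0 < kept C (\<alpha>!i)) (sorted_list_of_set R)"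
  have fin: "finite R" using R finite_subset by blast
  have \<tau>: "\<tau> = map (\<lambda>i. kept C (\<alpha>!i)) js" using f by (simp add: js_def filter_map o_def kept_def)
  have "sorted_wrt (<) js" unfolding js_def by (rule sorted_wrt_filter) (simp add: fin)
  moreover have js: "set js \<subseteq> {..<length \<alpha>}" using R fin by (auto simp: js_def)
  moreover have "sorted (rev \<alpha>)" using assms(1) by (simp add: is_partition_def)
  moreover have "\<forall>i\<in>set js. \<alpha>!i - kept C (\<alpha>!i) \<le> sum_list \<alpha>"
    using js by (auto intro: le_trans[OF diff_le_self elem_le_sum_list])
  ultimately show ?thesis using fits_kept_rows \<tau> by metis
qed

lemma kept_Un_atLeastLessThan:
  assumes "C \<subseteq> {..<b}" "b \<le> c"
  shows "card (C \<union> {b..<c}) = card C + (c - b)"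
    and "a \<le> b \<Longrightarrow> kept (C \<union> {b..<c}) a = kept C a"
    and "c \<le> a \<Longrightarrow> kept (C \<union> {b..<c}) a = card C + (c - b)"
proof -
  have "finite C" using assms(1) finite_subset by blast
  with assms(1) show card_Un: "card (C \<union> {b..<c}) = card C + (c - b)"
    by (subst card_Un_disjoint) auto
  show "a \<le> b \<Longrightarrow> kept (C \<union> {b..<c}) a = kept C a"
    unfolding kept_def by (rule arg_cong[of _ _ card]) auto
  assume "c \<le> a"
  hence "(C \<union> {b..<c}) \<inter> {..<a} = C \<union> {b..<c}" using assms by auto
  thus "kept (C \<union> {b..<c}) a = card C + (c - b)" using card_Un unfolding kept_def by simp
qed

text \<open>Conversely, a fitting \<open>\<sigma>\<close> is realised by rows \<open>js\<close> and a set \<open>C\<close> of kept columns, built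
  from the bottom row up: the row hosting \<open>t\<close> additionally keeps the columns \<open>[e' + hd0 \<sigma>, e' + t)\<close>,
  which lie beyond all the lower rows.\<close>

lemma fits_imp_kept_rows:
  assumes "fits (set \<alpha>) \<tau> e" "sorted_wrt (>) \<tau>" "sorted (rev \<alpha>)"
  shows "\<exists>js C. sorted_wrt (<) js \<and> set js \<subseteq> {..<length \<alpha>} \<and> (\<forall>i\<in>set js. \<alpha>!i \<le> e + hd0 \<tau>)
     \<and> C \<subseteq> {..<e + hd0 \<tau>} \<and> card C = hd0 \<tau> \<and> map (\<lambda>i. kept C (\<alpha>!i)) js = \<tau>"
  using assms
proof (induction \<tau> arbitrary: e)
  case Nil
  show ?case by (rule exI[of _ "[]"], rule exI[of _ "{}"]) (simp add: hd0_def)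
next
  case (Cons t \<sigma>)
  from Cons.prems(1) obtain v where "v \<in> set \<alpha>" "t \<le> v" "v - t \<le> e" "fits (set \<alpha>) \<sigma> (v - t)"
    by auto
  then obtain e' where v: "e' + t \<in> set \<alpha>" "e' \<le> e" "fits (set \<alpha>) \<sigma> e'"
    by (intro that[of "v - t"]) simp_all
  from Cons.IH[OF v(3)] Cons.prems(2,3) obtain js C where
    js: "sorted_wrt (<) js" "set js \<subseteq> {..<length \<alpha>}" "\<forall>i\<in>set js. \<alpha>!i \<le> e' + hd0 \<sigma>"
      "C \<subseteq> {..<e' + hd0 \<sigma>}" "card C = hd0 \<sigma>" "map (\<lambda>i. kept C (\<alpha>!i)) js = \<sigma>" by auto
  have t1: "hd0 \<sigma> \<le> t" "\<sigma> \<noteq> [] \<Longrightarrow> hd0 \<sigma> < t" using Cons.prems(2) by (cases \<sigma>; simp add: hd0_def)+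
  obtain i0 where i0: "i0 < length \<alpha>" "\<alpha>!i0 = e' + t" using v(1) by (auto simp: in_set_conv_nth)
  define C' where "C' = C \<union> {e' + hd0 \<sigma>..<e' + t}"
  note C' = kept_Un_atLeastLessThan[OF js(4), of "e' + t", folded C'_def]
  have lt: "i0 < i" if "i \<in> set js" for i
  proof -
    have "\<alpha>!i < \<alpha>!i0" using js(3,6) that t1(2) i0(2) by fastforce
    moreover have "i < length \<alpha>" using js(2) that by auto
    ultimately show ?thesis using sorted_rev_nth_mono[OF Cons.prems(3), of i i0] i0 by (metis leI not_le)
  qed
  show ?case
  proof (intro exI conjI)
    show "sorted_wrt (<) (i0 # js)" using js(1) lt by simp
    show "set (i0 # js) \<subseteq> {..<length \<alpha>}" using js(2) i0 by auto
    show "\<forall>i\<in>set (i0 # js). \<alpha> ! i \<le> e + hd0 (t # \<sigma>)" using js(3) i0(2) v(2) t1(1) by (auto simp: hd0_def)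
    show "C' \<subseteq> {..<e + hd0 (t # \<sigma>)}" using js(4) v(2) t1(1) by (auto simp: C'_def hd0_def)
    show "card C' = hd0 (t # \<sigma>)" using C'(1) js(5) t1(1) by (simp add: hd0_def)
    show "map (\<lambda>i. kept C' (\<alpha> ! i)) (i0 # js) = t # \<sigma>"
      using C'(2,3) js(3,5,6) i0(2) t1(1) by (auto intro!: map_cong)
  qed
qed

lemma contains_iff_fits:
  assumes "is_partition \<alpha>" "sorted_wrt (>) \<tau>" "0 \<notin> set \<tau>"
  shows "contains \<alpha> \<tau> \<longleftrightarrow> (\<exists>e. fits (set \<alpha>) \<tau> e)"
proof
  assume "contains \<alpha> \<tau>" thus "\<exists>e. fits (set \<alpha>) \<tau> e" using contains_imp_fits assms(1) by blast
next
  assume "\<exists>e. fits (set \<alpha>) \<tau> e"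
  then obtain e where e: "fits (set \<alpha>) \<tau> e" by blast
  have "sorted (rev \<alpha>)" using assms(1) by (simp add: is_partition_def)
  from fits_imp_kept_rows[OF e assms(2) this] obtain js C where js: "sorted_wrt (<) js"
    "set js \<subseteq> {..<length \<alpha>}" "map (\<lambda>i. kept C (\<alpha>!i)) js = \<tau>" by blast
  have sl: "sorted_list_of_set (set js) = js"
    using js(1) by (simp add: sorted_list_of_set_sort_remdups strict_sorted_iff distinct_remdups_id sorted_sort_id)
  have "filter (\<lambda>x. 0 < x) (map (\<lambda>i. card (C \<inter> {..<\<alpha> ! i})) (sorted_list_of_set (set js))) = \<tau>"
    using js(3) assms(3) unfolding sl kept_def by (metis (mono_tags, lifting) filter_True gr0I)
  thus "contains \<alpha> \<tau>" unfolding contains_def using js(2) by blast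
qed


section \<open>Partitions with a block of equal largest parts\<close>

lemma sorted_rev_le_hd: "sorted (rev xs) \<Longrightarrow> x \<in> set xs \<Longrightarrow> x \<le> hd xs"
  by (cases xs) (auto simp: sorted_append)

lemma partition_le_hd: "is_partition \<alpha> \<Longrightarrow> x \<in> set \<alpha> \<Longrightarrow> x \<le> hd \<alpha>"
  unfolding is_partition_def by (blast intro: sorted_rev_le_hd)

lemma partition_nonempty: "0 < weight \<alpha> \<Longrightarrow> \<alpha> \<noteq> []"
  by (auto simp: weight_def)

lemma partition_hd_pos: "is_partition \<alpha> \<Longrightarrow> \<alpha> \<noteq> [] \<Longrightarrow> 0 < hd \<alpha>"
  unfolding is_partition_def by (metis gr0I hd_in_set)

lemma is_partition_drop: "is_partition \<alpha> \<Longrightarrow> is_partition (drop j \<alpha>)"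
  unfolding is_partition_def by (auto simp: rev_drop dest: in_set_dropD intro: sorted_wrt_take)

lemma is_partition_replicate_append:
  "is_partition \<rho> \<Longrightarrow> \<forall>x\<in>set \<rho>. x \<le> L \<Longrightarrow> 0 < L \<Longrightarrow> is_partition (replicate m L @ \<rho>)"
  unfolding is_partition_def by (auto simp: sorted_append)

lemma weight_replicate_append: "weight (replicate m L @ \<rho>) = m * L + weight \<rho>"
  by (simp add: weight_def sum_list_replicate)

lemma hd_replicate_append: "0 < m \<Longrightarrow> hd (replicate m L @ \<rho>) = L"
  by (cases m) auto

lemma mlarge_replicate_append:
  "0 < m \<Longrightarrow> mlarge (replicate m L @ \<rho>) = m + length (filter (\<lambda>y. y = L) \<rho>)"
  by (simp add: mlarge_def hd_replicate_append)

lemma mlarge_replicate_append_less: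
  "0 < m \<Longrightarrow> \<forall>x\<in>set \<rho>. x < L \<Longrightarrow> mlarge (replicate m L @ \<rho>) = m"
  by (auto simp: mlarge_replicate_append filter_empty_conv)

lemma mlarge_pos: "\<alpha> \<noteq> [] \<Longrightarrow> 0 < mlarge \<alpha>"
  unfolding mlarge_def by (cases \<alpha>) auto

lemma length_le_weight: "is_partition \<alpha> \<Longrightarrow> length \<alpha> \<le> weight \<alpha>"
proof -
  assume "is_partition \<alpha>"
  hence "\<forall>x\<in>set \<alpha>. 1 \<le> x" by (auto simp: is_partition_def Suc_le_eq intro: gr0I)
  thus ?thesis unfolding weight_def by (induction \<alpha>) auto
qed

lemma mlarge_le_weight: "is_partition \<alpha> \<Longrightarrow> mlarge \<alpha> \<le> weight \<alpha>"
  using length_le_weight length_filter_le unfolding mlarge_def by (metis le_trans)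

lemma largest_block_decomp:
  assumes "sorted (rev \<alpha>)" "\<alpha> \<noteq> []"
  shows "\<alpha> = replicate (mlarge \<alpha>) (hd \<alpha>) @ drop (mlarge \<alpha>) \<alpha>"
    and "\<forall>x\<in>set (drop (mlarge \<alpha>) \<alpha>). x < hd \<alpha>"
proof -
  define h where "h = hd \<alpha>"
  define tw where "tw = takeWhile (\<lambda>y. y = h) \<alpha>"
  define d where "d = dropWhile (\<lambda>y. y = h) \<alpha>"
  have \<alpha>: "\<alpha> = tw @ d" by (simp add: tw_def d_def)
  have tw: "replicate (length tw) h = tw"
    by (rule replicate_length_same) (auto simp: tw_def dest: set_takeWhileD)
  have d_less: "\<forall>x\<in>set d. x < h"
  proof
    fix x assume x: "x \<in> set d"
    hence ne: "d \<noteq> []" by auto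
    hence "hd d \<noteq> h" unfolding d_def by (rule hd_dropWhile)
    moreover have "hd d \<in> set \<alpha>" using ne unfolding d_def by (meson hd_in_set set_dropWhileD)
    moreover have "sorted (rev d)" using assms(1) \<alpha> by (metis rev_append sorted_append)
    ultimately show "x < h" using sorted_rev_le_hd[OF _ x] sorted_rev_le_hd[OF assms(1)] h_def
      by fastforce
  qed
  have "filter (\<lambda>y. y = h) tw = tw" by (rule filter_True) (auto simp: tw_def dest: set_takeWhileD)
  moreover have "filter (\<lambda>y. y = h) d = []" using d_less by (auto simp: filter_empty_conv)
  ultimately have "filter (\<lambda>y. y = h) \<alpha> = tw" by (subst \<alpha>) simp
  hence m: "mlarge \<alpha> = length tw" by (simp add: mlarge_def h_def)
  have dr: "drop (length tw) \<alpha> = d" by (metis \<alpha> append_eq_conv_conj)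
  have "replicate (mlarge \<alpha>) (hd \<alpha>) @ drop (mlarge \<alpha>) \<alpha> = tw @ d"
    by (simp only: dr m tw h_def[symmetric])
  with \<alpha> show "\<alpha> = replicate (mlarge \<alpha>) (hd \<alpha>) @ drop (mlarge \<alpha>) \<alpha>" by simp
  show "\<forall>x\<in>set (drop (mlarge \<alpha>) \<alpha>). x < hd \<alpha>"
    using d_less dr m h_def by simp
qed

lemma largest_prefix_decomp:
  assumes "sorted (rev \<alpha>)" "\<alpha> \<noteq> []" "j \<le> mlarge \<alpha>"
  shows "\<alpha> = replicate j (hd \<alpha>) @ drop j \<alpha>"
proof -
  have "take j \<alpha> = replicate j (hd \<alpha>)"
    using assms(3) by (subst largest_block_decomp(1)[OF assms(1,2)]) simp
  thus ?thesis by (metis append_take_drop_id)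
qed

lemma partition_block_prefix:
  assumes "is_partition \<alpha>" "0 < weight \<alpha>" "j \<le> mlarge \<alpha>"
  obtains \<rho> where "\<alpha> = replicate j (hd \<alpha>) @ \<rho>" "\<rho> = drop j \<alpha>" "is_partition \<rho>"
    "\<forall>x\<in>set \<rho>. x \<le> hd \<alpha>" "0 < hd \<alpha>"
proof (rule that[of "drop j \<alpha>"])
  have "sorted (rev \<alpha>)" "\<alpha> \<noteq> []" using assms(1,2) partition_nonempty by (auto simp: is_partition_def)
  thus "\<alpha> = replicate j (hd \<alpha>) @ drop j \<alpha>" by (rule largest_prefix_decomp[OF _ _ assms(3)])
  show "is_partition (drop j \<alpha>)" by (rule is_partition_drop[OF assms(1)])
  show "\<forall>x\<in>set (drop j \<alpha>). x \<le> hd \<alpha>" using assms(1) by (auto intro: partition_le_hd dest: in_set_dropD)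
  show "0 < hd \<alpha>" using assms(1,2) partition_nonempty partition_hd_pos by blast
qed simp

lemma partition_largest_block:
  assumes "is_partition \<alpha>" "0 < weight \<alpha>"
  obtains \<rho> where "\<alpha> = replicate (mlarge \<alpha>) (hd \<alpha>) @ \<rho>" "\<rho> = drop (mlarge \<alpha>) \<alpha>"
    "is_partition \<rho>" "\<forall>x\<in>set \<rho>. x < hd \<alpha>" "0 < hd \<alpha>" "0 < mlarge \<alpha>"
proof (rule that[of "drop (mlarge \<alpha>) \<alpha>"])
  have "sorted (rev \<alpha>)" "\<alpha> \<noteq> []" using assms(1,2) partition_nonempty by (auto simp: is_partition_def)
  thus "\<alpha> = replicate (mlarge \<alpha>) (hd \<alpha>) @ drop (mlarge \<alpha>) \<alpha>"
    "\<forall>x\<in>set (drop (mlarge \<alpha>) \<alpha>). x < hd \<alpha>" "0 < mlarge \<alpha>"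
    using largest_block_decomp mlarge_pos by blast+
  show "is_partition (drop (mlarge \<alpha>) \<alpha>)" by (rule is_partition_drop[OF assms(1)])
  show "0 < hd \<alpha>" using assms(1,2) partition_nonempty partition_hd_pos by blast
qed simp


section \<open>Containing a strictly decreasing partition\<close>

definition strict_pos :: "nat list \<Rightarrow> bool" where
  "strict_pos \<tau> \<longleftrightarrow> sorted_wrt (>) \<tau> \<and> 0 \<notin> set \<tau>"

text \<open>A row of length \<open>v\<close> can keep \<open>t\<close> boxes while \<open>\<sigma>\<close> is cut from the parts \<open>S\<close> below it.\<close>

definition hosts :: "nat set \<Rightarrow> nat \<Rightarrow> nat list \<Rightarrow> nat \<Rightarrow> bool" where
  "hosts S t \<sigma> v \<longleftrightarrow> t \<le> v \<and> fits S \<sigma> (v - t)"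

lemma strict_pos_Suc: "strict_pos (t # \<sigma>) \<Longrightarrow> strict_pos (Suc t # \<sigma>)"
  by (auto simp: strict_pos_def)

lemma strict_pos_Cons_Cons: "strict_pos (t # \<sigma>) \<Longrightarrow> t < s \<Longrightarrow> strict_pos (s # t # \<sigma>)"
  by (auto simp: strict_pos_def)

lemma strict_pos_hd_pos: "strict_pos (t # \<sigma>) \<Longrightarrow> 0 < t"
  by (auto simp: strict_pos_def)

lemma hosts_ge: "hosts S t \<sigma> v \<Longrightarrow> t \<le> v"
  by (simp add: hosts_def)

lemma hosts_mono: "hosts S t \<sigma> v \<Longrightarrow> v \<le> v' \<Longrightarrow> hosts S t \<sigma> v'"
  unfolding hosts_def using fits_mono by (meson diff_le_mono le_trans)

lemma hosts_Suc: "hosts S (Suc t) \<sigma> v \<longleftrightarrow> 0 < v \<and> hosts S t \<sigma> (v - 1)"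
  unfolding hosts_def by (cases v) auto

lemma fits_cong:
  assumes "sorted_wrt (>) \<sigma>" "\<forall>x. x \<le> e + hd0 \<sigma> \<longrightarrow> (x \<in> S \<longleftrightarrow> x \<in> S')"
  shows "fits S \<sigma> e = fits S' \<sigma> e"
  using assms
proof (induction \<sigma> arbitrary: e)
  case Nil then show ?case by simp
next
  case (Cons t \<sigma>)
  have "hd0 \<sigma> \<le> t" using Cons.prems(1) by (cases \<sigma>) (auto simp: hd0_def)
  hence "fits S \<sigma> (v - t) = fits S' \<sigma> (v - t)" if "t \<le> v" "v - t \<le> e" for v
    using Cons.prems that by (intro Cons.IH) (auto simp: hd0_def)
  moreover have "v \<in> S \<longleftrightarrow> v \<in> S'" if "t \<le> v" "v - t \<le> e" for v
    using Cons.prems(2) that by (auto simp: hd0_def)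
  ultimately show ?case by auto
qed

lemma hosts_cong:
  assumes "strict_pos (t # \<sigma>)" "\<forall>x<v. x \<in> S \<longleftrightarrow> x \<in> S'"
  shows "hosts S t \<sigma> v = hosts S' t \<sigma> v"
proof (cases "t \<le> v")
  case True
  have "hd0 \<sigma> < t" using assms(1) by (cases \<sigma>) (auto simp: hd0_def strict_pos_def)
  hence "fits S \<sigma> (v - t) = fits S' \<sigma> (v - t)"
    by (intro fits_cong) (use assms True in \<open>auto simp: strict_pos_def\<close>)
  thus ?thesis by (simp add: hosts_def)
qed (simp add: hosts_def)

lemma contains_Cons_iff:
  assumes "is_partition \<alpha>" "\<alpha> \<noteq> []" "strict_pos (t # \<sigma>)"
  shows "contains \<alpha> (t # \<sigma>) \<longleftrightarrow> hosts (set \<alpha>) t \<sigma> (hd \<alpha>)"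
proof -
  have "contains \<alpha> (t # \<sigma>) \<longleftrightarrow> (\<exists>e. fits (set \<alpha>) (t # \<sigma>) e)"
    using assms by (intro contains_iff_fits) (auto simp: strict_pos_def)
  also have "\<dots> \<longleftrightarrow> (\<exists>v\<in>set \<alpha>. hosts (set \<alpha>) t \<sigma> v)" by (auto simp: hosts_def)
  also have "\<dots> \<longleftrightarrow> hosts (set \<alpha>) t \<sigma> (hd \<alpha>)"
    using assms(1,2) partition_le_hd hosts_mono by (metis hd_in_set)
  finally show ?thesis .
qed

lemma contains_Cons_Suc_imp:
  assumes "is_partition \<alpha>" "strict_pos (t # \<sigma>)" "contains \<alpha> (Suc t # \<sigma>)"
  shows "contains \<alpha> (t # \<sigma>)"
proof -
  have "\<alpha> \<noteq> []" using assms(3) by (auto simp: contains_def)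
  with assms show ?thesis
    using contains_Cons_iff strict_pos_Suc hosts_mono[of "set \<alpha>" t \<sigma> "hd \<alpha> - 1" "hd \<alpha>"]
    by (simp add: hosts_Suc)
qed

lemma contains_Cons_Cons_imp:
  assumes "is_partition \<alpha>" "strict_pos (s # t # \<sigma>)" "contains \<alpha> (s # t # \<sigma>)"
  shows "contains \<alpha> (t # \<sigma>)"
proof -
  have "strict_pos (t # \<sigma>)" using assms(2) by (auto simp: strict_pos_def)
  moreover obtain e where "fits (set \<alpha>) (s # t # \<sigma>) e"
    using contains_iff_fits[OF assms(1)] assms(2,3) by (auto simp: strict_pos_def)
  ultimately show ?thesis using contains_iff_fits[OF assms(1)] by (auto simp: strict_pos_def)
qed

lemma contains_block_iff:
  assumes "0 < m" "is_partition \<rho>" "\<forall>x\<in>set \<rho>. x \<le> L" "0 < L" "strict_pos (t # \<sigma>)"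
  shows "contains (replicate m L @ \<rho>) (t # \<sigma>) \<longleftrightarrow> hosts (set \<rho>) t \<sigma> L"
proof -
  have "set (replicate m L @ \<rho>) = insert L (set \<rho>)" using assms(1) by auto
  hence "contains (replicate m L @ \<rho>) (t # \<sigma>) \<longleftrightarrow> hosts (insert L (set \<rho>)) t \<sigma> L"
    using contains_Cons_iff[of "replicate m L @ \<rho>" t \<sigma>] is_partition_replicate_append[OF assms(2-4)]
      assms(1,5) by (simp add: hd_replicate_append)
  also have "\<dots> \<longleftrightarrow> hosts (set \<rho>) t \<sigma> L" by (rule hosts_cong[OF assms(5)]) auto
  finally show ?thesis .
qed

lemma contains_block_Cons_Cons_iff:
  assumes "0 < m" "is_partition \<rho>" "\<forall>x\<in>set \<rho>. x \<le> L" "0 < L" "strict_pos (t # \<sigma>)" "t < s"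
  shows "contains (replicate m L @ \<rho>) (s # t # \<sigma>) \<longleftrightarrow>
     (\<exists>v\<in>set \<rho>. hosts (set \<rho>) t \<sigma> v \<and> v + s \<le> L + t)"
proof -
  have ss: "strict_pos (s # t # \<sigma>)" using strict_pos_Cons_Cons[OF assms(5,6)] .
  have "set (replicate m L @ \<rho>) = insert L (set \<rho>)" using assms(1) by auto
  hence "contains (replicate m L @ \<rho>) (s # t # \<sigma>) \<longleftrightarrow> hosts (insert L (set \<rho>)) s (t # \<sigma>) L"
    using contains_Cons_iff[of "replicate m L @ \<rho>" s "t # \<sigma>"] is_partition_replicate_append[OF assms(2-4)]
      assms(1) ss by (simp add: hd_replicate_append)
  also have "\<dots> \<longleftrightarrow> (\<exists>v\<in>insert L (set \<rho>). hosts (insert L (set \<rho>)) t \<sigma> v \<and> v + s \<le> L + t)"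
    unfolding hosts_def by auto
  also have "\<dots> \<longleftrightarrow> (\<exists>v\<in>set \<rho>. hosts (set \<rho>) t \<sigma> v \<and> v + s \<le> L + t)"
  proof -
    have "hosts (insert L (set \<rho>)) t \<sigma> v = hosts (set \<rho>) t \<sigma> v" if "v < L" for v
      by (rule hosts_cong[OF assms(5)]) (use that in auto)
    moreover have "v + s \<le> L + t \<Longrightarrow> v < L" for v using assms(6) by linarith
    ultimately show ?thesis by blast
  qed
  finally show ?thesis .
qed


section \<open>Partitions containing \<open>\<tau>\<close> but avoiding a one-box extension of it\<close>

lemma AvSet_eq_Un_QSet:
  assumes "\<And>\<alpha>. is_partition \<alpha> \<Longrightarrow> contains \<alpha> \<mu> \<Longrightarrow> contains \<alpha> \<tau>"
  shows "AvSet \<mu> = AvSet \<tau> \<union> QSet \<tau> \<mu>" and "AvSet \<tau> \<inter> QSet \<tau> \<mu> = {}"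
  using assms unfolding AvSet_def QSet_def avoids_def by blast+

definition threshold :: "nat set \<Rightarrow> nat \<Rightarrow> nat list \<Rightarrow> nat" where
  "threshold S t \<sigma> = (LEAST v. hosts S t \<sigma> v)"

lemma hosts_iff_threshold_le:
  assumes "hosts S t \<sigma> w"
  shows "hosts S t \<sigma> v \<longleftrightarrow> threshold S t \<sigma> \<le> v"
proof
  show "hosts S t \<sigma> v \<Longrightarrow> threshold S t \<sigma> \<le> v" unfolding threshold_def by (rule Least_le)
  have "hosts S t \<sigma> (threshold S t \<sigma>)" unfolding threshold_def by (rule LeastI, rule assms)
  thus "threshold S t \<sigma> \<le> v \<Longrightarrow> hosts S t \<sigma> v" by (rule hosts_mono)
qed

lemma QSet_block_iff:
  assumes "0 < m" "is_partition \<rho>" "\<forall>x\<in>set \<rho>. x \<le> L" "0 < L"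
  shows "replicate m L @ \<rho> \<in> QSet \<tau> \<mu> \<longleftrightarrow>
    contains (replicate m L @ \<rho>) \<tau> \<and> \<not> contains (replicate m L @ \<rho>) \<mu>"
  using is_partition_replicate_append[OF assms(2-4)] assms(1,4)
  by (simp add: QSet_def avoids_def weight_replicate_append)

lemma QSet_Suc_block_iff:
  assumes "0 < m" "is_partition \<rho>" "\<forall>x\<in>set \<rho>. x \<le> L" "0 < L" "strict_pos (t # \<sigma>)"
  shows "replicate m L @ \<rho> \<in> QSet (t # \<sigma>) (Suc t # \<sigma>) \<longleftrightarrow>
    hosts (set \<rho>) t \<sigma> L \<and> \<not> hosts (set \<rho>) (Suc t) \<sigma> L"
  unfolding QSet_block_iff[OF assms(1-4)] contains_block_iff[OF assms]
    contains_block_iff[OF assms(1-4) strict_pos_Suc[OF assms(5)]] ..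

lemma QSet_Suc_Cons_block_iff:
  assumes "0 < m" "is_partition \<rho>" "\<forall>x\<in>set \<rho>. x \<le> L" "0 < L" "strict_pos (t # \<sigma>)"
  shows "replicate m L @ \<rho> \<in> QSet (t # \<sigma>) (Suc t # t # \<sigma>) \<longleftrightarrow>
    hosts (set \<rho>) t \<sigma> L \<and> (\<forall>v\<in>set \<rho>. v < L \<longrightarrow> \<not> hosts (set \<rho>) t \<sigma> v)"
proof -
  have "contains (replicate m L @ \<rho>) (Suc t # t # \<sigma>) \<longleftrightarrow>
      (\<exists>v\<in>set \<rho>. hosts (set \<rho>) t \<sigma> v \<and> v + Suc t \<le> L + t)"
    by (rule contains_block_Cons_Cons_iff[OF assms]) simp
  also have "\<dots> \<longleftrightarrow> (\<exists>v\<in>set \<rho>. v < L \<and> hosts (set \<rho>) t \<sigma> v)"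
    by (auto simp: Suc_le_eq)
  finally show ?thesis
    unfolding QSet_block_iff[OF assms(1-4)] contains_block_iff[OF assms] by blast
qed

lemma QSet_Suc_block_iff_threshold:
  assumes "0 < m" "is_partition \<rho>" "\<forall>x\<in>set \<rho>. x < L" "0 < L" "strict_pos (t # \<sigma>)"
  shows "replicate m L @ \<rho> \<in> QSet (t # \<sigma>) (Suc t # \<sigma>) \<longleftrightarrow>
    hosts (set \<rho>) t \<sigma> L \<and> L = threshold (set \<rho>) t \<sigma>"
proof -
  have "\<forall>x\<in>set \<rho>. x \<le> L" using assms(3) by auto
  moreover have "\<not> hosts (set \<rho>) t \<sigma> (L - 1) \<longleftrightarrow> L = threshold (set \<rho>) t \<sigma>"
    if "hosts (set \<rho>) t \<sigma> L"
  proof -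
    have "threshold (set \<rho>) t \<sigma> \<le> L" using hosts_iff_threshold_le[OF that, of L] that ..
    thus ?thesis using hosts_iff_threshold_le[OF that, of "L - 1"] assms(4) by auto
  qed
  ultimately show ?thesis using QSet_Suc_block_iff[OF assms(1,2) _ assms(4,5)] assms(4)
    by (auto simp: hosts_Suc)
qed

lemma QSet_Suc_Cons_block_iff_threshold:
  assumes "0 < m" "is_partition \<rho>" "\<forall>x\<in>set \<rho>. x < L" "0 < L" "strict_pos (t # \<sigma>)"
  shows "replicate m L @ \<rho> \<in> QSet (t # \<sigma>) (Suc t # t # \<sigma>) \<longleftrightarrow>
    hosts (set \<rho>) t \<sigma> L \<and> (\<forall>x\<in>set \<rho>. x < threshold (set \<rho>) t \<sigma>)"
proof -
  have "\<forall>x\<in>set \<rho>. x \<le> L" using assms(3) by auto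
  moreover have "(\<forall>v\<in>set \<rho>. v < L \<longrightarrow> \<not> hosts (set \<rho>) t \<sigma> v) \<longleftrightarrow>
      (\<forall>x\<in>set \<rho>. x < threshold (set \<rho>) t \<sigma>)" if "hosts (set \<rho>) t \<sigma> L"
    using hosts_iff_threshold_le[OF that] assms(3) by (meson not_le)
  ultimately show ?thesis using QSet_Suc_Cons_block_iff[OF assms(1,2) _ assms(4,5)] by blast
qed

lemma QSet_Suc_block_Suc_iff:
  assumes "0 < m" "is_partition \<rho>" "\<forall>x\<in>set \<rho>. x \<le> L" "0 < L" "strict_pos (t # \<sigma>)"
  shows "replicate m (Suc L) @ \<rho> \<in> QSet (Suc t # \<sigma>) (Suc (Suc t) # \<sigma>) \<longleftrightarrow>
    replicate m L @ \<rho> \<in> QSet (t # \<sigma>) (Suc t # \<sigma>)"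
proof -
  have "\<forall>x\<in>set \<rho>. x \<le> Suc L" using assms(3) by auto
  from QSet_Suc_block_iff[OF assms(1,2) this _ strict_pos_Suc[OF assms(5)]] show ?thesis
    using QSet_Suc_block_iff[OF assms] by (simp add: hosts_Suc)
qed

lemma QSet_Suc_Cons_block_Suc_iff:
  assumes "0 < m" "is_partition \<rho>" "\<forall>x\<in>set \<rho>. x \<le> L" "0 < L" "strict_pos (t # \<sigma>)"
  shows "replicate m (Suc L) @ \<rho> \<in> QSet (Suc t # t # \<sigma>) (Suc (Suc t) # t # \<sigma>) \<longleftrightarrow>
    replicate m L @ \<rho> \<in> QSet (t # \<sigma>) (Suc t # t # \<sigma>) \<and> L \<in> set \<rho>"
proof -
  have le: "\<forall>x\<in>set \<rho>. x \<le> Suc L" using assms(3) by auto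
  have "contains (replicate m (Suc L) @ \<rho>) (Suc t # t # \<sigma>) \<longleftrightarrow>
      (\<exists>v\<in>set \<rho>. hosts (set \<rho>) t \<sigma> v \<and> v + Suc t \<le> Suc L + t)"
    by (rule contains_block_Cons_Cons_iff[OF assms(1,2) le _ assms(5)]) simp_all
  also have "\<dots> \<longleftrightarrow> (\<exists>v\<in>set \<rho>. hosts (set \<rho>) t \<sigma> v)" using assms(3) by auto
  finally have c1: "contains (replicate m (Suc L) @ \<rho>) (Suc t # t # \<sigma>) \<longleftrightarrow>
      (\<exists>v\<in>set \<rho>. hosts (set \<rho>) t \<sigma> v)" .
  have "contains (replicate m (Suc L) @ \<rho>) (Suc (Suc t) # t # \<sigma>) \<longleftrightarrow>
      (\<exists>v\<in>set \<rho>. hosts (set \<rho>) t \<sigma> v \<and> v + Suc (Suc t) \<le> Suc L + t)"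
    by (rule contains_block_Cons_Cons_iff[OF assms(1,2) le _ assms(5)]) simp_all
  also have "\<dots> \<longleftrightarrow> (\<exists>v\<in>set \<rho>. v < L \<and> hosts (set \<rho>) t \<sigma> v)"
    by (auto simp: Suc_le_eq)
  finally have c2: "contains (replicate m (Suc L) @ \<rho>) (Suc (Suc t) # t # \<sigma>) \<longleftrightarrow>
      (\<exists>v\<in>set \<rho>. v < L \<and> hosts (set \<rho>) t \<sigma> v)" .
  have "(\<exists>v\<in>set \<rho>. hosts (set \<rho>) t \<sigma> v) \<and> \<not> (\<exists>v\<in>set \<rho>. v < L \<and> hosts (set \<rho>) t \<sigma> v) \<longleftrightarrow>
      hosts (set \<rho>) t \<sigma> L \<and> L \<in> set \<rho> \<and> (\<forall>v\<in>set \<rho>. v < L \<longrightarrow> \<not> hosts (set \<rho>) t \<sigma> v)"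
    using assms(3) by (metis le_neq_implies_less)
  thus ?thesis
    unfolding QSet_block_iff[OF assms(1,2) le zero_less_Suc] c1 c2 QSet_Suc_Cons_block_iff[OF assms]
    by blast
qed


section \<open>Bijections that move the largest parts\<close>

definition with_block :: "nat \<Rightarrow> nat \<Rightarrow> nat list \<Rightarrow> nat list" where
  "with_block j L \<alpha> = replicate j L @ drop j \<alpha>"

lemma with_block_replicate_append [simp]:
  "with_block j L' (replicate j L @ \<rho>) = replicate j L' @ \<rho>"
  by (simp add: with_block_def)

lemma contains_Cons_le_hd:
  assumes "is_partition \<alpha>" "\<alpha> \<noteq> []" "strict_pos (t # \<sigma>)" "contains \<alpha> (t # \<sigma>)"
  shows "t \<le> hd \<alpha>"
  using contains_Cons_iff[OF assms(1-3)] assms(4) hosts_ge by blast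

lemma card_raise_block:
  assumes "0 < j"
    and A: "\<And>\<alpha>. \<alpha> \<in> A \<Longrightarrow> is_partition \<alpha> \<and> 0 < weight \<alpha>"
    and B: "\<And>\<gamma>. \<gamma> \<in> B \<Longrightarrow> is_partition \<gamma> \<and> 0 < weight \<gamma> \<and> 1 < hd \<gamma>"
    and AB: "\<And>L \<rho>. is_partition \<rho> \<Longrightarrow> \<forall>x\<in>set \<rho>. x \<le> L \<Longrightarrow> 0 < L \<Longrightarrow>
      replicate j (Suc L) @ \<rho> \<in> B \<longleftrightarrow> replicate j L @ \<rho> \<in> A"
  shows "card {\<gamma>\<in>B. weight \<gamma> = k \<and> mlarge \<gamma> = j} = card {\<alpha>\<in>A. weight \<alpha> + j = k \<and> j \<le> mlarge \<alpha>}"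
proof -
  let ?A = "{\<alpha>\<in>A. weight \<alpha> + j = k \<and> j \<le> mlarge \<alpha>}"
  let ?B = "{\<gamma>\<in>B. weight \<gamma> = k \<and> mlarge \<gamma> = j}"
  let ?f = "\<lambda>\<alpha>. with_block j (Suc (hd \<alpha>)) \<alpha>" and ?g = "\<lambda>\<gamma>. with_block j (hd \<gamma> - 1) \<gamma>"
  have "?f a \<in> ?B \<and> ?g (?f a) = a" if a: "a \<in> ?A" for a
  proof -
    have "is_partition a" "0 < weight a" "j \<le> mlarge a" using A a by auto
    then obtain \<rho> where d: "a = replicate j (hd a) @ \<rho>" "\<rho> = drop j a" "is_partition \<rho>"
      "\<forall>x\<in>set \<rho>. x \<le> hd a" "0 < hd a"
      by (rule partition_block_prefix)
    define L where "L = hd a"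
    have a': "a = replicate j L @ \<rho>" using d(1) by (simp add: L_def)
    have fa: "?f a = replicate j (Suc L) @ \<rho>" by (subst (2) a') (simp add: L_def)
    have "?f a \<in> B" unfolding fa using AB[OF d(3-5)[folded L_def]] a a' by simp
    moreover have "weight (?f a) = k" using a by (subst (asm) a') (simp add: fa weight_replicate_append)
    moreover have "mlarge (?f a) = j"
      unfolding fa using d(4) assms(1) by (intro mlarge_replicate_append_less) (auto simp: L_def)
    moreover have "?g (?f a) = a" unfolding fa using assms(1) a' by (simp add: hd_replicate_append)
    ultimately show ?thesis by simp
  qed
  moreover have "?g b \<in> ?A \<and> ?f (?g b) = b" if b: "b \<in> ?B" for b
  proof -
    have "is_partition b" "0 < weight b" "mlarge b = j" using B b by auto
    then obtain \<rho> where d: "b = replicate j (hd b) @ \<rho>" "is_partition \<rho>" "\<forall>x\<in>set \<rho>. x < hd b"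
      by (metis partition_largest_block)
    define L where "L = hd b - 1"
    have "1 < hd b" using B b by blast
    hence L: "hd b = Suc L" "0 < L" by (auto simp: L_def)
    have b': "b = replicate j (Suc L) @ \<rho>" using d(1) L(1) by simp
    have le: "\<forall>x\<in>set \<rho>. x \<le> L" using d(3) L(1) by auto
    have gb: "?g b = replicate j L @ \<rho>" by (subst b') (simp add: L(1))
    have "?g b \<in> A" unfolding gb using AB[OF d(2) le L(2)] b b' by simp
    moreover have "weight (?g b) + j = k"
      unfolding gb using b by (subst (asm) b') (simp add: weight_replicate_append)
    moreover have "j \<le> mlarge (?g b)" unfolding gb using assms(1) by (simp add: mlarge_replicate_append)
    moreover have "?f (?g b) = b" unfolding gb using assms(1) b' by (simp add: hd_replicate_append)
    ultimately show ?thesis by simp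
  qed
  ultimately have "bij_betw ?f ?A ?B" by (intro bij_betw_byWitness[where f' = ?g]) auto
  thus ?thesis by (simp add: bij_betw_same_card)
qed

lemma card_QSet_Suc_mlarge_eq:
  assumes "strict_pos (t # \<sigma>)" "0 < j"
  shows "card {\<gamma>\<in>QSet (Suc t # \<sigma>) (Suc (Suc t) # \<sigma>). weight \<gamma> = k \<and> mlarge \<gamma> = j}
       = card {\<alpha>\<in>QSet (t # \<sigma>) (Suc t # \<sigma>). weight \<alpha> + j = k \<and> j \<le> mlarge \<alpha>}"
proof (rule card_raise_block[OF assms(2)])
  fix \<gamma> assume "\<gamma> \<in> QSet (Suc t # \<sigma>) (Suc (Suc t) # \<sigma>)"
  hence \<gamma>: "is_partition \<gamma>" "0 < weight \<gamma>" "contains \<gamma> (Suc t # \<sigma>)" by (auto simp: QSet_def)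
  hence "Suc t \<le> hd \<gamma>"
    using contains_Cons_le_hd partition_nonempty strict_pos_Suc[OF assms(1)] by blast
  thus "is_partition \<gamma> \<and> 0 < weight \<gamma> \<and> 1 < hd \<gamma>" using \<gamma> strict_pos_hd_pos[OF assms(1)] by simp
next
  fix L \<rho> assume "is_partition \<rho>" "\<forall>x\<in>set \<rho>. x \<le> L" "0 < L"
  from QSet_Suc_block_Suc_iff[OF assms(2) this assms(1)]
  show "replicate j (Suc L) @ \<rho> \<in> QSet (Suc t # \<sigma>) (Suc (Suc t) # \<sigma>) \<longleftrightarrow>
    replicate j L @ \<rho> \<in> QSet (t # \<sigma>) (Suc t # \<sigma>)" .
qed (simp add: QSet_def)

lemma card_QSet_Suc_Cons_mlarge_eq:
  assumes "strict_pos (t # \<sigma>)" "0 < j"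
  shows "card {\<gamma>\<in>QSet (Suc t # t # \<sigma>) (Suc (Suc t) # t # \<sigma>). weight \<gamma> = k \<and> mlarge \<gamma> = j}
       = card {\<alpha>\<in>QSet (t # \<sigma>) (Suc t # t # \<sigma>). weight \<alpha> + j = k \<and> j < mlarge \<alpha>}"
proof -
  let ?D = "{\<alpha>\<in>QSet (t # \<sigma>) (Suc t # t # \<sigma>). j < mlarge \<alpha>}"
  have "card {\<gamma>\<in>QSet (Suc t # t # \<sigma>) (Suc (Suc t) # t # \<sigma>). weight \<gamma> = k \<and> mlarge \<gamma> = j}
      = card {\<alpha>\<in>?D. weight \<alpha> + j = k \<and> j \<le> mlarge \<alpha>}"
  proof (rule card_raise_block[OF assms(2)])
    fix \<gamma> assume "\<gamma> \<in> QSet (Suc t # t # \<sigma>) (Suc (Suc t) # t # \<sigma>)"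
    hence \<gamma>: "is_partition \<gamma>" "0 < weight \<gamma>" "contains \<gamma> (Suc t # t # \<sigma>)" by (auto simp: QSet_def)
    hence "Suc t \<le> hd \<gamma>"
      using contains_Cons_le_hd partition_nonempty strict_pos_Cons_Cons[OF assms(1)] by blast
    thus "is_partition \<gamma> \<and> 0 < weight \<gamma> \<and> 1 < hd \<gamma>" using \<gamma> strict_pos_hd_pos[OF assms(1)] by simp
  next
    fix L \<rho> assume \<rho>: "is_partition \<rho>" "\<forall>x\<in>set \<rho>. x \<le> L" "0 < L"
    have "j < mlarge (replicate j L @ \<rho>) \<longleftrightarrow> L \<in> set \<rho>"
      using assms(2) by (auto simp: mlarge_replicate_append filter_empty_conv)
    thus "replicate j (Suc L) @ \<rho> \<in> QSet (Suc t # t # \<sigma>) (Suc (Suc t) # t # \<sigma>) \<longleftrightarrow>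
        replicate j L @ \<rho> \<in> ?D"
      using QSet_Suc_Cons_block_Suc_iff[OF assms(2) \<rho> assms(1)] by simp
  qed (simp add: QSet_def)
  also have "{\<alpha>\<in>?D. weight \<alpha> + j = k \<and> j \<le> mlarge \<alpha>}
      = {\<alpha>\<in>QSet (t # \<sigma>) (Suc t # t # \<sigma>). weight \<alpha> + j = k \<and> j < mlarge \<alpha>}" by auto
  finally show ?thesis .
qed

lemma QSet_largest_block:
  assumes "\<alpha> \<in> QSet \<tau> \<mu>"
  obtains m L \<rho> where "\<alpha> = replicate m L @ \<rho>" "mlarge \<alpha> = m" "hd \<alpha> = L" "drop m \<alpha> = \<rho>"
    "is_partition \<rho>" "\<forall>x\<in>set \<rho>. x < L" "0 < L" "0 < m"
proof -
  have "is_partition \<alpha>" "0 < weight \<alpha>" using assms by (auto simp: QSet_def)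
  then obtain \<rho> where "\<alpha> = replicate (mlarge \<alpha>) (hd \<alpha>) @ \<rho>" "\<rho> = drop (mlarge \<alpha>) \<alpha>"
    "is_partition \<rho>" "\<forall>x\<in>set \<rho>. x < hd \<alpha>" "0 < hd \<alpha>" "0 < mlarge \<alpha>"
    by (rule partition_largest_block)
  thus ?thesis using that by simp
qed

text \<open>\<open>lift_largest n\<close> raises the block of largest parts so that the weight becomes \<open>n\<close>, provided the
  size of the block divides the missing weight; \<open>settle_largest\<close> lowers that block to the threshold of
  the remaining parts.\<close>

definition lift_largest :: "nat \<Rightarrow> nat list \<Rightarrow> nat list" where
  "lift_largest n \<alpha> = with_block (mlarge \<alpha>) (hd \<alpha> + (n - weight \<alpha>) div mlarge \<alpha>) \<alpha>"

definition settle_largest :: "nat \<Rightarrow> nat list \<Rightarrow> nat list \<Rightarrow> nat list" where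
  "settle_largest t \<sigma> \<gamma> = with_block (mlarge \<gamma>) (threshold (set (drop (mlarge \<gamma>) \<gamma>)) t \<sigma>) \<gamma>"

lemma lift_largest_QSet:
  assumes "strict_pos (t # \<sigma>)" "\<alpha> \<in> QSet (t # \<sigma>) (Suc t # \<sigma>)" "weight \<alpha> \<le> n" "mlarge \<alpha> dvd (n - weight \<alpha>)"
  shows "lift_largest n \<alpha> \<in> QSet (t # \<sigma>) (Suc t # t # \<sigma>)" "weight (lift_largest n \<alpha>) = n"
    "mlarge (lift_largest n \<alpha>) = mlarge \<alpha>" "settle_largest t \<sigma> (lift_largest n \<alpha>) = \<alpha>"
proof -
  obtain m L \<rho> where d: "\<alpha> = replicate m L @ \<rho>" "mlarge \<alpha> = m" "hd \<alpha> = L" "drop m \<alpha> = \<rho>"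
    "is_partition \<rho>" "\<forall>x\<in>set \<rho>. x < L" "0 < L" "0 < m"
    using assms(2) by (auto elim: QSet_largest_block)
  define r where "r = (n - weight \<alpha>) div m"
  have f: "lift_largest n \<alpha> = replicate m (L + r) @ \<rho>" by (simp add: lift_largest_def with_block_def d(2-4) r_def)
  have h: "hosts (set \<rho>) t \<sigma> L" "L = threshold (set \<rho>) t \<sigma>"
    using assms(2) QSet_Suc_block_iff_threshold[OF d(8,5,6,7) assms(1)] unfolding d(1) by auto
  have lt: "\<forall>x\<in>set \<rho>. x < L + r" using d(6) by auto
  show "lift_largest n \<alpha> \<in> QSet (t # \<sigma>) (Suc t # t # \<sigma>)" unfolding f
    using QSet_Suc_Cons_block_iff_threshold[OF d(8,5) lt _ assms(1)] hosts_mono[OF h(1)] h(2) d(6,7)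
    by simp
  have "n - weight \<alpha> = m * r" using assms(4) d(2) by (simp add: r_def)
  moreover have "weight \<alpha> = m * L + weight \<rho>" by (subst d(1)) (simp add: weight_replicate_append)
  ultimately show "weight (lift_largest n \<alpha>) = n"
    using assms(3) unfolding f by (simp add: weight_replicate_append algebra_simps)
  show m: "mlarge (lift_largest n \<alpha>) = mlarge \<alpha>"
    unfolding f d(2) by (rule mlarge_replicate_append_less[OF d(8) lt])
  show "settle_largest t \<sigma> (lift_largest n \<alpha>) = \<alpha>"
    using m unfolding settle_largest_def d(2) f using h(2) d(1) by simp
qed

lemma settle_largest_QSet:
  assumes "strict_pos (t # \<sigma>)" "\<gamma> \<in> QSet (t # \<sigma>) (Suc t # t # \<sigma>)"
  shows "settle_largest t \<sigma> \<gamma> \<in> QSet (t # \<sigma>) (Suc t # \<sigma>)" "weight (settle_largest t \<sigma> \<gamma>) \<le> weight \<gamma>"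
    "mlarge (settle_largest t \<sigma> \<gamma>) = mlarge \<gamma>"
    "mlarge \<gamma> dvd (weight \<gamma> - weight (settle_largest t \<sigma> \<gamma>))"
    "lift_largest (weight \<gamma>) (settle_largest t \<sigma> \<gamma>) = \<gamma>"
proof -
  obtain m L \<rho> where d: "\<gamma> = replicate m L @ \<rho>" "mlarge \<gamma> = m" "hd \<gamma> = L" "drop m \<gamma> = \<rho>"
    "is_partition \<rho>" "\<forall>x\<in>set \<rho>. x < L" "0 < L" "0 < m"
    using assms(2) by (auto elim: QSet_largest_block)
  define W where "W = threshold (set \<rho>) t \<sigma>"
  have h: "hosts (set \<rho>) t \<sigma> L" "\<forall>x\<in>set \<rho>. x < W"
    using assms(2) QSet_Suc_Cons_block_iff_threshold[OF d(8,5,6,7) assms(1)] unfolding d(1) W_def by auto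
  have W: "W \<le> L" "hosts (set \<rho>) t \<sigma> W"
    using hosts_iff_threshold_le[OF h(1), of L] hosts_iff_threshold_le[OF h(1), of W] h(1)
    unfolding W_def by auto
  have "0 < W" using hosts_ge[OF W(2)] strict_pos_hd_pos[OF assms(1)] by simp
  have g: "settle_largest t \<sigma> \<gamma> = replicate m W @ \<rho>" by (simp add: settle_largest_def with_block_def d(2,4) W_def)
  show "settle_largest t \<sigma> \<gamma> \<in> QSet (t # \<sigma>) (Suc t # \<sigma>)" unfolding g
    using QSet_Suc_block_iff_threshold[OF d(8,5) h(2) \<open>0 < W\<close> assms(1)] W(2) by (simp add: W_def)
  have wb: "weight \<gamma> = m * L + weight \<rho>" by (subst d(1)) (simp add: weight_replicate_append)
  have "m * W + weight \<rho> \<le> m * L + weight \<rho>" using W(1) by simp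
  thus "weight (settle_largest t \<sigma> \<gamma>) \<le> weight \<gamma>" unfolding g weight_replicate_append wb .
  have nd: "weight \<gamma> - weight (settle_largest t \<sigma> \<gamma>) = m * (L - W)"
    by (simp add: wb g weight_replicate_append diff_mult_distrib2)
  thus "mlarge \<gamma> dvd (weight \<gamma> - weight (settle_largest t \<sigma> \<gamma>))" by (simp add: d(2))
  show m: "mlarge (settle_largest t \<sigma> \<gamma>) = mlarge \<gamma>"
    unfolding g d(2) by (rule mlarge_replicate_append_less[OF d(8) h(2)])
  show "lift_largest (weight \<gamma>) (settle_largest t \<sigma> \<gamma>) = \<gamma>"
    using nd m unfolding lift_largest_def d(2) using d(1,8) W(1) g by (simp add: hd_replicate_append)
qed

lemma card_QSet_Suc_Cons_weight_eq:
  assumes "strict_pos (t # \<sigma>)"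
  shows "card {\<gamma>\<in>QSet (t # \<sigma>) (Suc t # t # \<sigma>). weight \<gamma> = n \<and> P (mlarge \<gamma>)}
       = card {\<alpha>\<in>QSet (t # \<sigma>) (Suc t # \<sigma>). weight \<alpha> \<le> n \<and> mlarge \<alpha> dvd (n - weight \<alpha>) \<and> P (mlarge \<alpha>)}"
proof -
  have "bij_betw (lift_largest n)
    {\<alpha>\<in>QSet (t # \<sigma>) (Suc t # \<sigma>). weight \<alpha> \<le> n \<and> mlarge \<alpha> dvd (n - weight \<alpha>) \<and> P (mlarge \<alpha>)}
    {\<gamma>\<in>QSet (t # \<sigma>) (Suc t # t # \<sigma>). weight \<gamma> = n \<and> P (mlarge \<gamma>)}"
    using lift_largest_QSet[OF assms] settle_largest_QSet[OF assms]
    by (intro bij_betw_byWitness[where f' = "settle_largest t \<sigma>"]) auto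
  thus ?thesis by (simp add: bij_betw_same_card)
qed


section \<open>Coefficients of the operators \<open>\<E>\<close> and \<open>\<N>\<close>\<close>

lemma mult_inv1: "f $ 0 = 1 \<Longrightarrow> f * inv1 f = 1"
  unfolding inv1_def by (rule fps_right_inverse) simp

lemma mult_div_inv1:
  assumes "H * f = G" "f $ 0 = 1"
  shows "G * inv1 f = (H :: bser)"
proof -
  have "G * inv1 f = H * (f * inv1 f)" by (simp add: assms(1)[symmetric] mult.assoc)
  thus ?thesis by (simp add: mult_inv1[OF assms(2)])
qed

lemma inv1_unique: "(V::bser) * f = 1 \<Longrightarrow> f $ 0 = 1 \<Longrightarrow> inv1 f = V"
  using mult_div_inv1[of V f 1] by simp

lemma fps_nth_mult_Tvar_X:
  "(F * (Tvar * fps_X)) $ k = (if k = 0 then 0 else pCons 0 (F $ (k - 1)))"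
proof -
  have "F * (Tvar * fps_X) = (F * fps_X) * fps_const [:0, 1:]" by (simp add: Tvar_def mult_ac)
  hence "(F * (Tvar * fps_X)) $ k = (F * fps_X) $ k * [:0, 1:]" by (simp only: fps_mult_right_const_nth)
  thus ?thesis by (simp add: mult_pCons_right)
qed

lemma coeff_at_zt: "coeff (at_zt G $ k) i = (if i \<le> k then coeff (G $ (k - i)) i else 0)"
proof -
  have "coeff (at_zt G $ k) i = (\<Sum>n\<le>k. if n = k - i \<and> i \<le> k then coeff (G $ (k - i)) i else 0)"
    by (simp add: at_zt_def coeff_sum coeff_monom) (rule sum.cong, auto)
  thus ?thesis by (cases "i \<le> k") (simp_all add: sum.delta)
qed

lemma poly_1_eq_sum_coeff:
  fixes p :: "int poly"
  assumes "degree p \<le> k"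
  shows "poly p 1 = (\<Sum>m\<le>k. coeff p m)"
proof -
  have "poly p 1 = (\<Sum>m\<le>degree p. coeff p m)" by (subst poly_altdef) simp
  also have "\<dots> = (\<Sum>m\<le>k. coeff p m)"
    by (rule sum.mono_neutral_left) (use assms in \<open>auto simp: coeff_eq_0\<close>)
  finally show ?thesis .
qed

text \<open>The degree bound holds for every series \<open>Fser S\<close>: the largest part of a partition of \<open>n\<close>
  occurs at most \<open>n\<close> times.\<close>

lemma coeff_opE:
  assumes deg: "\<And>n. degree (G $ n) \<le> n"
  shows "coeff (opE G $ k) i = (if i \<le> k then \<Sum>m=i..k-i. coeff (G $ (k - i)) m else 0)"
proof -
  define H where "H = Abs_fps (\<lambda>k. \<Sum>j\<le>k. monom (\<Sum>m=j..k-j. coeff (G $ (k - j)) m) j)"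
  have cH: "coeff (H $ k) i = (if i \<le> k then \<Sum>m=i..k-i. coeff (G $ (k - i)) m else 0)" for k i
    by (simp add: H_def coeff_sum coeff_monom)
  have "H * (1 - Tvar * fps_X) = at_t1 G - Tvar * fps_X * at_zt G"
  proof (rule fps_ext, rule poly_eqI)
    fix k i
    have "coeff ((H * (1 - Tvar * fps_X)) $ k) i
        = coeff (H $ k) i - (if k = 0 then 0 else coeff (pCons 0 (H $ (k - 1))) i)"
      by (simp add: right_diff_distrib fps_nth_mult_Tvar_X)
    also have "\<dots> = (if i = 0 then poly (G $ k) 1 else 0)
        - (if k = 0 then 0 else coeff (pCons 0 (at_zt G $ (k - 1))) i)"
    proof (cases i)
      case 0 thus ?thesis using cH[of k 0] poly_1_eq_sum_coeff[OF deg[of k]] by (simp add: atLeast0AtMost)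
    next
      case (Suc i')
      have "coeff (G $ (k - i)) i' = 0" if "k - i < i'" "i \<le> k"
        using deg[of "k - i"] that by (simp add: coeff_eq_0)
      hence "i \<le> k \<Longrightarrow> (\<Sum>m=i'..k-i. coeff (G $ (k - i)) m)
          = coeff (G $ (k - i)) i' + (\<Sum>m=i..k-i. coeff (G $ (k - i)) m)"
        using Suc by (cases "i' \<le> k - i") (simp_all add: sum.atLeast_Suc_atMost)
      moreover have "k - 1 - i' = k - i" using Suc by simp
      ultimately show ?thesis using cH[of k i] cH[of "k - 1" i'] Suc
        by (auto simp: coeff_at_zt)
    qed
    also have "\<dots> = coeff ((at_t1 G - Tvar * fps_X * at_zt G) $ k) i"
      by (simp add: at_t1_def mult.commute[of "Tvar * fps_X"] fps_nth_mult_Tvar_X coeff_pCons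
          split: nat.split)
    finally show "coeff ((H * (1 - Tvar * fps_X)) $ k) i = coeff ((at_t1 G - Tvar * fps_X * at_zt G) $ k) i" .
  qed
  hence "opE G = H" unfolding opE_def by (rule mult_div_inv1) simp
  thus ?thesis by (simp add: cH)
qed

lemma inv1_one_minus_X_power:
  assumes "0 < m"
  shows "inv1 (1 - fps_X ^ m) = Abs_fps (\<lambda>k. if m dvd k then 1 else 0)"
proof (rule inv1_unique)
  show "Abs_fps (\<lambda>k. if m dvd k then 1 else 0) * (1 - fps_X ^ m) = (1 :: bser)"
  proof (rule fps_ext)
    fix k
    have "m dvd k \<longleftrightarrow> m dvd (k - m)" if "\<not> k < m" using that by (simp add: dvd_minus_self)
    thus "(Abs_fps (\<lambda>k. if m dvd k then 1 else 0) * (1 - fps_X ^ m)) $ k = (1 :: bser) $ k"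
      using assms by (cases "k < m")
        (auto simp: right_diff_distrib fps_X_power_mult_right_nth dest: dvd_imp_le)
  qed
qed (use assms in simp)

lemma one_minus_Tvar_X_power_div:
  "(1 - (Tvar * fps_X) ^ m) * inv1 (1 - Tvar * fps_X) = Abs_fps (\<lambda>i. if i < m then monom 1 i else 0)"
proof (rule mult_div_inv1)
  have "(Tvar * fps_X) ^ j = fps_const (monom 1 j) * fps_X ^ j" for j
    by (simp add: Tvar_def power_mult_distrib fps_const_power monom_altdef)
  hence "(\<Sum>j<m. (Tvar * fps_X) ^ j) = Abs_fps (\<lambda>i. if i < m then monom 1 i else 0)"
    by (intro fps_ext) (simp add: fps_sum_nth fps_X_power_nth if_distrib sum.delta cong: if_cong)
  moreover have "(\<Sum>j<m. (Tvar * fps_X) ^ j) * (1 - Tvar * fps_X) = 1 - (Tvar * fps_X) ^ m"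
    by (metis mult.commute one_diff_power_eq)
  ultimately show "Abs_fps (\<lambda>i. if i < m then monom 1 i else 0) * (1 - Tvar * fps_X)
      = 1 - (Tvar * fps_X) ^ m" by simp
qed simp

lemma coeff_Nterm:
  assumes "0 < m"
  shows "coeff (Nterm a n m $ k) j = (if j < m \<and> j + n \<le> k \<and> m dvd (k - n - j) then a else 0)"
proof -
  define V :: bser where "V = Abs_fps (\<lambda>k. if m dvd k then 1 else 0)"
  define P :: bser where "P = Abs_fps (\<lambda>i. if i < m then monom 1 i else 0)"
  have VP: "coeff ((V * P) $ i) j = (if j \<le> i \<and> j < m \<and> m dvd (i - j) then 1 else 0)" for i
  proof -
    have "coeff ((V * P) $ i) j = (\<Sum>l=0..i. if l = i - j \<and> j \<le> i \<and> j < m \<and> m dvd (i - j) then 1 else 0)"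
      by (simp add: fps_mult_nth coeff_sum) (rule sum.cong, auto simp: V_def P_def coeff_monom)
    thus ?thesis by (auto simp: sum.delta)
  qed
  have "Nterm a n m = fps_const [:a:] * ((V * P) * fps_X ^ n)"
    unfolding Nterm_def V_def P_def inv1_one_minus_X_power[OF assms]
      one_minus_Tvar_X_power_div[symmetric] by (simp add: mult_ac)
  hence "Nterm a n m $ k = [:a:] * (if k < n then 0 else (V * P) $ (k - n))"
    by (simp add: fps_X_power_mult_right_nth)
  thus ?thesis by (auto simp: VP)
qed

lemma coeff_opN:
  assumes deg: "\<And>n. degree (G $ n) \<le> n"
  shows "coeff (opN G $ k) j = (if j = 0 then coeff (G $ k) 0 else 0)
     + (\<Sum>n\<in>{1..k}. \<Sum>m\<in>{1..n}. if j < m \<and> j + n \<le> k \<and> m dvd (k - n - j) then coeff (G $ n) m else 0)"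
proof -
  have "(\<Sum>m\<in>{1..degree (G $ n)}. coeff (Nterm (coeff (G $ n) m) n m $ k) j)
      = (\<Sum>m\<in>{1..n}. if j < m \<and> j + n \<le> k \<and> m dvd (k - n - j) then coeff (G $ n) m else 0)" for n
  proof -
    have "(\<Sum>m\<in>{1..degree (G $ n)}. coeff (Nterm (coeff (G $ n) m) n m $ k) j)
       = (\<Sum>m\<in>{1..degree (G $ n)}. if j < m \<and> j + n \<le> k \<and> m dvd (k - n - j) then coeff (G $ n) m else 0)"
      by (rule sum.cong) (auto simp: coeff_Nterm)
    also have "\<dots> = (\<Sum>m\<in>{1..n}. if j < m \<and> j + n \<le> k \<and> m dvd (k - n - j) then coeff (G $ n) m else 0)"
      by (rule sum.mono_neutral_left) (use deg[of n] in \<open>auto simp: coeff_eq_0\<close>)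
    finally show ?thesis .
  qed
  thus ?thesis
    unfolding opN_def by (simp add: at_t0_def coeff_sum poly_0_coeff_0 coeff_pCons split: nat.split)
qed


section \<open>The recursion for \<open>G(\<tau>,\<mu>)\<close>\<close>

definition of_weight :: "nat list set \<Rightarrow> nat \<Rightarrow> nat list set" where
  "of_weight X n = {\<alpha>\<in>X. is_partition \<alpha> \<and> weight \<alpha> = n}"

definition Fsplit :: "nat list \<Rightarrow> nat list \<Rightarrow> bser" where
  "Fsplit \<tau> \<mu> = at_t1 (Fser (AvSet \<tau>)) + Fser (QSet \<tau> \<mu>)"

lemma finite_of_weight: "finite (of_weight X n)"
proof (rule finite_subset)
  show "of_weight X n \<subseteq> {xs. set xs \<subseteq> {..n} \<and> length xs \<le> n}"
    using length_le_weight member_le_sum_list by (fastforce simp: of_weight_def weight_def)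
qed (rule finite_lists_length_le, simp)

lemma card_of_weight_AvSet_split:
  assumes "\<And>\<alpha>. is_partition \<alpha> \<Longrightarrow> contains \<alpha> \<mu> \<Longrightarrow> contains \<alpha> \<tau>"
  shows "card (of_weight (AvSet \<mu>) n) = card (of_weight (AvSet \<tau>) n) + card (of_weight (QSet \<tau> \<mu>) n)"
proof -
  have "of_weight (AvSet \<mu>) n = of_weight (AvSet \<tau>) n \<union> of_weight (QSet \<tau> \<mu>) n"
    "of_weight (AvSet \<tau>) n \<inter> of_weight (QSet \<tau> \<mu>) n = {}"
    using AvSet_eq_Un_QSet[OF assms] by (auto simp: of_weight_def)
  thus ?thesis by (simp add: card_Un_disjoint finite_of_weight)
qed

lemma card_fibers:
  assumes "finite S" "finite T" "f ` S \<subseteq> T"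
  shows "(\<Sum>y\<in>T. card {x\<in>S. f x = y}) = card S"
  using sum.group[OF assms, of "\<lambda>_. 1::nat"] by simp

lemma Fser_nth: "Fser X $ n = (\<Sum>\<alpha>\<in>of_weight X n. monom 1 (mlarge \<alpha>))"
  by (simp add: Fser_def of_weight_def)

lemma coeff_Fser: "coeff (Fser X $ n) m = int (card {\<alpha>\<in>of_weight X n. mlarge \<alpha> = m})"
proof -
  have "coeff (Fser X $ n) m = (\<Sum>\<alpha>\<in>of_weight X n. if mlarge \<alpha> = m then 1 else 0)"
    by (simp add: Fser_nth coeff_sum coeff_monom)
  thus ?thesis by (simp add: sum.inter_filter[symmetric] finite_of_weight)
qed

lemma at_t1_Fser: "at_t1 (Fser X) $ n = [:int (card (of_weight X n)):]"
  by (simp add: at_t1_def Fser_nth poly_sum poly_monom)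

lemma QSet_mlarge_pos: "\<alpha> \<in> QSet \<tau> \<mu> \<Longrightarrow> 0 < mlarge \<alpha>"
  using mlarge_pos partition_nonempty by (auto simp: QSet_def)

lemma coeff_Fsplit:
  "coeff (Fsplit \<tau> \<mu> $ n) m = (if m = 0 then int (card (of_weight (AvSet \<tau>) n)) else 0)
        + int (card {\<alpha>\<in>of_weight (QSet \<tau> \<mu>) n. mlarge \<alpha> = m})"
  by (simp add: Fsplit_def at_t1_Fser coeff_Fser coeff_pCons split: nat.split)

lemma card_QSet_mlarge_0: "card {\<alpha>\<in>of_weight (QSet \<tau> \<mu>) n. mlarge \<alpha> = 0} = 0"
proof -
  have "{\<alpha>\<in>of_weight (QSet \<tau> \<mu>) n. mlarge \<alpha> = 0} = {}"
    using QSet_mlarge_pos by (fastforce simp: of_weight_def)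
  thus ?thesis by (simp only: card.empty)
qed

lemma card_QSet_mlarge_gt_weight:
  assumes "n < m"
  shows "card {\<alpha>\<in>of_weight (QSet \<tau> \<mu>) n. mlarge \<alpha> = m} = 0"
proof -
  have "{\<alpha>\<in>of_weight (QSet \<tau> \<mu>) n. mlarge \<alpha> = m} = {}"
    using mlarge_le_weight assms by (fastforce simp: of_weight_def)
  thus ?thesis by (simp only: card.empty)
qed

lemma degree_Fsplit: "degree (Fsplit \<tau> \<mu> $ n) \<le> n"
  by (rule degree_le) (simp add: coeff_Fsplit card_QSet_mlarge_gt_weight)

lemma sum_card_mlarge:
  "(\<Sum>m=j..n. card {\<alpha>\<in>of_weight X n. mlarge \<alpha> = m}) = card {\<alpha>\<in>of_weight X n. j \<le> mlarge \<alpha>}"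
proof -
  let ?S = "{\<alpha>\<in>of_weight X n. j \<le> mlarge \<alpha>}"
  have "mlarge ` ?S \<subseteq> {j..n}" using mlarge_le_weight by (auto simp: of_weight_def)
  hence "(\<Sum>m=j..n. card {\<alpha>\<in>?S. mlarge \<alpha> = m}) = card ?S"
    by (intro card_fibers) (auto simp: finite_of_weight)
  moreover have "{\<alpha>\<in>?S. mlarge \<alpha> = m} = {\<alpha>\<in>of_weight X n. mlarge \<alpha> = m}" if "j \<le> m" for m
    using that by auto
  ultimately show ?thesis by simp
qed

lemma sum_coeff_Fsplit:
  "(\<Sum>m=i..n. coeff (Fsplit \<tau> \<mu> $ n) m) = (if i = 0 then int (card (of_weight (AvSet \<tau>) n)) else 0)
     + int (card {\<alpha>\<in>of_weight (QSet \<tau> \<mu>) n. i \<le> mlarge \<alpha>})"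
proof -
  have "(\<Sum>m=i..n. coeff (Fsplit \<tau> \<mu> $ n) m) = (if i = 0 then int (card (of_weight (AvSet \<tau>) n)) else 0)
      + int (\<Sum>m=i..n. card {\<alpha>\<in>of_weight (QSet \<tau> \<mu>) n. mlarge \<alpha> = m})"
    by (simp add: coeff_Fsplit sum.distrib sum.delta)
  thus ?thesis by (simp only: sum_card_mlarge)
qed

lemma opE_Fsplit:
  assumes "strict_pos (t # \<sigma>)"
  shows "opE (Fsplit (t # \<sigma>) (Suc t # \<sigma>)) = Fsplit (Suc t # \<sigma>) (Suc (Suc t) # \<sigma>)"
proof (rule fps_ext, rule poly_eqI)
  fix k i
  let ?Q = "QSet (t # \<sigma>) (Suc t # \<sigma>)" and ?Q' = "QSet (Suc t # \<sigma>) (Suc (Suc t) # \<sigma>)"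
  have E: "coeff (opE (Fsplit (t # \<sigma>) (Suc t # \<sigma>)) $ k) i = (if i \<le> k then
      (if i = 0 then int (card (of_weight (AvSet (t # \<sigma>)) (k - i))) else 0)
      + int (card {\<alpha>\<in>of_weight ?Q (k - i). i \<le> mlarge \<alpha>}) else 0)"
    unfolding coeff_opE[OF degree_Fsplit] sum_coeff_Fsplit ..
  consider "i = 0" | "0 < i" "i \<le> k" | "k < i" by linarith
  then show "coeff (opE (Fsplit (t # \<sigma>) (Suc t # \<sigma>)) $ k) i
      = coeff (Fsplit (Suc t # \<sigma>) (Suc (Suc t) # \<sigma>) $ k) i"
  proof cases
    case 1
    have "card (of_weight (AvSet (Suc t # \<sigma>)) k) = card (of_weight (AvSet (t # \<sigma>)) k) + card (of_weight ?Q k)"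
      using card_of_weight_AvSet_split[OF contains_Cons_Suc_imp[OF _ assms]] .
    thus ?thesis using 1 E by (simp add: coeff_Fsplit card_QSet_mlarge_0)
  next
    case 2
    have "{\<alpha>\<in>of_weight ?Q (k - i). i \<le> mlarge \<alpha>} = {\<alpha>\<in>?Q. weight \<alpha> + i = k \<and> i \<le> mlarge \<alpha>}"
      using 2 by (auto simp: of_weight_def QSet_def)
    moreover have "{\<gamma>\<in>?Q'. weight \<gamma> = k \<and> mlarge \<gamma> = i} = {\<gamma>\<in>of_weight ?Q' k. mlarge \<gamma> = i}"
      by (auto simp: of_weight_def QSet_def)
    ultimately show ?thesis using 2 E card_QSet_Suc_mlarge_eq[OF assms 2(1), of k] by (simp add: coeff_Fsplit)
  next
    case 3
    thus ?thesis using E by (simp add: coeff_Fsplit card_QSet_mlarge_gt_weight)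
  qed
qed

lemma sum_sum_card_QSet_mlarge:
  "(\<Sum>n\<in>{1..k}. \<Sum>m\<in>{1..n}. if C n m then int (card {\<alpha>\<in>of_weight (QSet \<tau> \<mu>) n. mlarge \<alpha> = m}) else 0)
     = int (card {\<alpha>\<in>QSet \<tau> \<mu>. weight \<alpha> \<le> k \<and> C (weight \<alpha>) (mlarge \<alpha>)})"
proof -
  define S where "S n = {\<alpha>\<in>of_weight (QSet \<tau> \<mu>) n. C n (mlarge \<alpha>)}" for n
  have "(\<Sum>m\<in>{1..n}. if C n m then int (card {\<alpha>\<in>of_weight (QSet \<tau> \<mu>) n. mlarge \<alpha> = m}) else 0)
      = int (card (S n))" for n
  proof -
    have "mlarge ` S n \<subseteq> {1..n}"
      using mlarge_le_weight QSet_mlarge_pos by (auto simp: S_def of_weight_def Suc_leI)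
    hence "(\<Sum>m\<in>{1..n}. card {\<alpha>\<in>S n. mlarge \<alpha> = m}) = card (S n)"
      by (intro card_fibers) (auto simp: S_def finite_of_weight)
    moreover have "card {\<alpha>\<in>S n. mlarge \<alpha> = m}
        = (if C n m then card {\<alpha>\<in>of_weight (QSet \<tau> \<mu>) n. mlarge \<alpha> = m} else 0)" for m
    proof (cases "C n m")
      case False
      hence "{\<alpha>\<in>S n. mlarge \<alpha> = m} = {}" by (auto simp: S_def)
      thus ?thesis using False by (simp only: card.empty if_False)
    qed (auto simp: S_def intro: arg_cong[of _ _ card])
    ultimately have "int (\<Sum>m\<in>{1..n}. if C n m then card {\<alpha>\<in>of_weight (QSet \<tau> \<mu>) n. mlarge \<alpha> = m} else 0)
        = int (card (S n))" by simp
    thus ?thesis by (simp add: if_distrib cong: if_cong)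
  qed
  hence "(\<Sum>n\<in>{1..k}. \<Sum>m\<in>{1..n}. if C n m then int (card {\<alpha>\<in>of_weight (QSet \<tau> \<mu>) n. mlarge \<alpha> = m}) else 0)
      = int (\<Sum>n\<in>{1..k}. card (S n))"
    by simp
  also have "(\<Sum>n\<in>{1..k}. card (S n)) = card (\<Union>n\<in>{1..k}. S n)"
    by (rule card_UN_disjoint[symmetric])
      (auto simp: S_def of_weight_def intro: finite_subset[OF _ finite_of_weight])
  also have "(\<Union>n\<in>{1..k}. S n) = {\<alpha>\<in>QSet \<tau> \<mu>. weight \<alpha> \<le> k \<and> C (weight \<alpha>) (mlarge \<alpha>)}"
    by (auto simp: S_def of_weight_def QSet_def Suc_leI)
  finally show ?thesis .
qed

lemma coeff_opN_Fsplit: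
  "coeff (opN (Fsplit \<tau> \<mu>) $ k) j = (if j = 0 then int (card (of_weight (AvSet \<tau>) k)) else 0)
     + int (card {\<alpha>\<in>QSet \<tau> \<mu>. weight \<alpha> \<le> k - j \<and> mlarge \<alpha> dvd (k - j - weight \<alpha>) \<and> j < mlarge \<alpha>})"
proof -
  let ?C = "\<lambda>n m :: nat. j < m \<and> j + n \<le> k \<and> m dvd (k - n - j)"
  have "coeff (opN (Fsplit \<tau> \<mu>) $ k) j = (if j = 0 then coeff (Fsplit \<tau> \<mu> $ k) 0 else 0)
      + (\<Sum>n\<in>{1..k}. \<Sum>m\<in>{1..n}. if ?C n m then int (card {\<alpha>\<in>of_weight (QSet \<tau> \<mu>) n. mlarge \<alpha> = m}) else 0)"
    unfolding coeff_opN[OF degree_Fsplit] by (intro arg_cong2[of _ _ _ _ "(+)"] sum.cong refl)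
      (auto simp: coeff_Fsplit)
  moreover have "{\<alpha>\<in>QSet \<tau> \<mu>. weight \<alpha> \<le> k \<and> ?C (weight \<alpha>) (mlarge \<alpha>)}
      = {\<alpha>\<in>QSet \<tau> \<mu>. weight \<alpha> \<le> k - j \<and> mlarge \<alpha> dvd (k - j - weight \<alpha>) \<and> j < mlarge \<alpha>}"
    by (auto simp: QSet_def diff_commute add.commute)
  moreover have "coeff (Fsplit \<tau> \<mu> $ k) 0 = int (card (of_weight (AvSet \<tau>) k))"
    by (simp add: coeff_Fsplit card_QSet_mlarge_0)
  ultimately show ?thesis by (simp only: sum_sum_card_QSet_mlarge)
qed

lemma coeff_Fsplit_Suc_Cons:
  assumes "strict_pos (t # \<sigma>)"
  shows "coeff (Fsplit (Suc t # t # \<sigma>) (Suc (Suc t) # t # \<sigma>) $ k) j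
    = (if j = 0 then int (card (of_weight (AvSet (t # \<sigma>)) k)) else 0)
      + int (card {\<gamma>\<in>QSet (t # \<sigma>) (Suc t # t # \<sigma>). weight \<gamma> + j = k \<and> j < mlarge \<gamma>})"
proof (cases "j = 0")
  case True
  let ?D = "QSet (t # \<sigma>) (Suc t # t # \<sigma>)"
  have "{\<gamma>\<in>?D. weight \<gamma> + j = k \<and> j < mlarge \<gamma>} = of_weight ?D k"
    using True QSet_mlarge_pos by (auto simp: of_weight_def QSet_def)
  moreover have "card (of_weight (AvSet (Suc t # t # \<sigma>)) k)
      = card (of_weight (AvSet (t # \<sigma>)) k) + card (of_weight ?D k)"
    using contains_Cons_Cons_imp strict_pos_Cons_Cons[OF assms lessI]
    by (blast intro: card_of_weight_AvSet_split)
  ultimately show ?thesis using True by (simp add: coeff_Fsplit card_QSet_mlarge_0)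
next
  case False
  have "{\<gamma>\<in>QSet (Suc t # t # \<sigma>) (Suc (Suc t) # t # \<sigma>). weight \<gamma> = k \<and> mlarge \<gamma> = j}
      = {\<gamma>\<in>of_weight (QSet (Suc t # t # \<sigma>) (Suc (Suc t) # t # \<sigma>)) k. mlarge \<gamma> = j}"
    by (auto simp: of_weight_def QSet_def)
  thus ?thesis using False card_QSet_Suc_Cons_mlarge_eq[OF assms, of j k] by (simp add: coeff_Fsplit)
qed

lemma opN_Fsplit:
  assumes "strict_pos (t # \<sigma>)"
  shows "opN (Fsplit (t # \<sigma>) (Suc t # \<sigma>)) = Fsplit (Suc t # t # \<sigma>) (Suc (Suc t) # t # \<sigma>)"
proof (rule fps_ext, rule poly_eqI)
  fix k j
  let ?D = "QSet (t # \<sigma>) (Suc t # t # \<sigma>)"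
  have "{\<gamma>\<in>?D. weight \<gamma> = k - j \<and> j < mlarge \<gamma>} = {\<gamma>\<in>?D. weight \<gamma> + j = k \<and> j < mlarge \<gamma>}"
    by (auto simp: QSet_def)
  thus "coeff (opN (Fsplit (t # \<sigma>) (Suc t # \<sigma>)) $ k) j = coeff (Fsplit (Suc t # t # \<sigma>) (Suc (Suc t) # t # \<sigma>) $ k) j"
    unfolding coeff_opN_Fsplit coeff_Fsplit_Suc_Cons[OF assms]
    using card_QSet_Suc_Cons_weight_eq[OF assms, of "k - j" "\<lambda>m. j < m"] by simp
qed


section \<open>The operator word \<open>\<Theta>\<close> of a super-strict partition\<close>

lemma is_partition_Cons_iff:
  "is_partition (a # \<rho>) \<longleftrightarrow> is_partition \<rho> \<and> 0 < a \<and> (\<forall>x\<in>set \<rho>. x \<le> a)"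
  by (auto simp: is_partition_def sorted_append)

lemma super_strict_Cons_iff:
  "super_strict (a # \<rho>) \<longleftrightarrow> super_strict \<rho> \<and> (\<rho> \<noteq> [] \<longrightarrow> hd \<rho> + 2 \<le> a)"
proof
  assume ss: "super_strict (a # \<rho>)"
  show "super_strict \<rho> \<and> (\<rho> \<noteq> [] \<longrightarrow> hd \<rho> + 2 \<le> a)"
  proof (intro conjI impI)
    show "super_strict \<rho>" unfolding super_strict_def
    proof (intro allI impI)
      fix i assume "i + 1 < length \<rho>"
      thus "\<rho> ! (i + 1) + 2 \<le> \<rho> ! i" using ss[unfolded super_strict_def, rule_format, of "Suc i"] by simp
    qed
    show "hd \<rho> + 2 \<le> a" if "\<rho> \<noteq> []"
      using that ss[unfolded super_strict_def, rule_format, of 0] by (cases \<rho>) auto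
  qed
next
  assume "super_strict \<rho> \<and> (\<rho> \<noteq> [] \<longrightarrow> hd \<rho> + 2 \<le> a)"
  thus "super_strict (a # \<rho>)" unfolding super_strict_def
    by (auto simp: nth_Cons hd_conv_nth split: nat.split)
qed

lemma partition_super_strict_Cons:
  assumes "is_partition (a # \<rho>)" "super_strict (a # \<rho>)"
  shows "is_partition \<rho>" "super_strict \<rho>" "0 < a" "\<rho> \<noteq> [] \<Longrightarrow> hd0 \<rho> + 2 \<le> a" "hd0 \<rho> < a"
proof -
  show "is_partition \<rho>" "super_strict \<rho>" "0 < a"
    using assms by (simp_all add: is_partition_Cons_iff super_strict_Cons_iff)
  show h: "hd0 \<rho> + 2 \<le> a" if "\<rho> \<noteq> []"
    using that assms(2) by (auto simp: super_strict_Cons_iff hd0_def split: list.split)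
  show "hd0 \<rho> < a"
    using h \<open>0 < a\<close> by (cases "\<rho> = []") (auto simp: hd0_def)
qed

lemma partition_super_strict_ConsI:
  assumes "is_partition \<rho>" "super_strict \<rho>" "hd0 \<rho> + 2 \<le> a"
  shows "is_partition (a # \<rho>)" "super_strict (a # \<rho>)"
proof -
  have "\<forall>x\<in>set \<rho>. x \<le> a"
  proof
    fix x assume "x \<in> set \<rho>"
    moreover from this have "hd0 \<rho> = hd \<rho>" by (cases \<rho>) (auto simp: hd0_def)
    ultimately show "x \<le> a" using partition_le_hd[OF assms(1)] assms(3) by fastforce
  qed
  thus "is_partition (a # \<rho>)" using assms(1,3) by (simp add: is_partition_Cons_iff)
  show "super_strict (a # \<rho>)" using assms(2,3) by (cases \<rho>) (auto simp: super_strict_Cons_iff hd0_def)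
qed

lemma super_strict_sorted: "is_partition \<rho> \<Longrightarrow> super_strict \<rho> \<Longrightarrow> sorted_wrt (>) \<rho>"
proof (induction \<rho>)
  case (Cons a \<rho>)
  hence "\<forall>x\<in>set \<rho>. x < a"
    using partition_le_hd by (fastforce simp: is_partition_Cons_iff super_strict_Cons_iff)
  thus ?case using Cons by (simp add: is_partition_Cons_iff super_strict_Cons_iff)
qed simp

lemma strict_pos_Cons_super_strict:
  assumes "is_partition \<rho>" "super_strict \<rho>" "hd0 \<rho> < t"
  shows "strict_pos (t # \<rho>)"
proof -
  have "\<forall>x\<in>set \<rho>. x < t" using assms(1,3) partition_le_hd by (cases \<rho>) (fastforce simp: hd0_def)+
  thus ?thesis using super_strict_sorted[OF assms(1,2)] assms(1,3)
    by (auto simp: strict_pos_def is_partition_def hd0_def)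
qed

lemma border_Cons: "border (a # \<rho>) = border \<rho> @ replicate (a - hd0 \<rho>) East @ [North]"
proof -
  define f where
    "f = (\<lambda>(\<mu>::nat list) i. replicate (\<mu> ! i - (if i + 1 < length \<mu> then \<mu> ! (i+1) else 0)) East @ [North])"
  have b: "border \<mu> = concat (map (f \<mu>) (rev [0..<length \<mu>]))" for \<mu> by (simp add: border_def f_def)
  have r: "rev [0..<length (a # \<rho>)] = map Suc (rev [0..<length \<rho>]) @ [0]"
    by (simp add: upt_conv_Cons map_Suc_upt[symmetric] rev_map del: upt_Suc)
  have m: "map (f (a # \<rho>)) (map Suc (rev [0..<length \<rho>])) = map (f \<rho>) (rev [0..<length \<rho>])"
    by (simp add: f_def)
  have f0: "f (a # \<rho>) 0 = replicate (a - hd0 \<rho>) East @ [North]"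
    by (simp add: f_def hd0_def split: list.split)
  have "border (a # \<rho>) = concat (map (f (a # \<rho>)) (map Suc (rev [0..<length \<rho>]) @ [0]))"
    unfolding b r ..
  also have "\<dots> = concat (map (f (a # \<rho>)) (map Suc (rev [0..<length \<rho>]))) @ f (a # \<rho>) 0" by simp
  also have "\<dots> = border \<rho> @ replicate (a - hd0 \<rho>) East @ [North]" unfolding m f0 b[of \<rho>] ..
  finally show ?thesis .
qed

text \<open>The border of \<open>\<rho>\<close> with its first step dropped and the east step that pairs with its last
  north step appended; adding a row \<open>a > hd0 \<rho>\<close> on top continues it by east steps.\<close>

definition border_prefix :: "nat list \<Rightarrow> step list" where
  "border_prefix \<rho> = (if \<rho> = [] then [] else tl (border \<rho>) @ [East])"

lemma tl_border_Cons:
  assumes "hd0 \<rho> < a"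
  shows "tl (border (a # \<rho>)) = border_prefix \<rho> @ replicate (a - hd0 \<rho> - 1) East @ [North]"
proof (cases \<rho>)
  case Nil
  then obtain a' where "a = Suc a'" using assms by (cases a) (auto simp: hd0_def)
  thus ?thesis using Nil by (simp add: border_Cons border_prefix_def border_def hd0_def)
next
  case (Cons b \<rho>')
  hence "border \<rho> \<noteq> []" by (simp add: border_Cons)
  moreover obtain d where "a - hd0 \<rho> = Suc d" using assms by (cases "a - hd0 \<rho>") auto
  ultimately show ?thesis using Cons unfolding border_Cons[of a \<rho>]
    by (simp add: border_prefix_def replicate_append_same)
qed

fun east_ne :: "step list \<Rightarrow> bool" where
  "east_ne [] = True"
| "east_ne (East # xs) = east_ne xs"
| "east_ne (North # East # xs) = east_ne xs"
| "east_ne (North # xs) = False"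

lemma tokens_append: "east_ne xs \<Longrightarrow> tokens (xs @ ys) = tokens xs @ tokens ys"
  by (induction xs rule: east_ne.induct) auto

lemma east_ne_append: "east_ne xs \<Longrightarrow> east_ne ys \<Longrightarrow> east_ne (xs @ ys)"
  by (induction xs rule: east_ne.induct) auto

lemma east_ne_replicate_East_NE: "east_ne (replicate n East @ [North, East])"
  by (induction n) auto

lemma tokens_replicate_East: "tokens (replicate n East) = replicate n OpE"
  by (induction n) auto

lemma tokens_replicate_East_NE: "tokens (replicate n East @ [North, East]) = replicate n OpE @ [OpN]"
  by (induction n) auto

lemma east_ne_border_prefix:
  "is_partition \<rho> \<Longrightarrow> super_strict \<rho> \<Longrightarrow> east_ne (border_prefix \<rho>)"
proof (induction \<rho>)
  case (Cons a \<rho>)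
  from Cons.prems have "hd0 \<rho> < a" by (rule partition_super_strict_Cons(5))
  thus ?case using Cons
    by (simp add: border_prefix_def tl_border_Cons east_ne_append east_ne_replicate_East_NE is_partition_Cons_iff
        super_strict_Cons_iff)
qed (simp add: border_prefix_def)

lemma Theta_Cons:
  assumes "is_partition (a # \<rho>)" "super_strict (a # \<rho>)" "2 \<le> a"
  shows "Theta (a # \<rho>) = tokens (border_prefix \<rho>) @ replicate (a - hd0 \<rho> - 2) OpE"
proof -
  note ss = partition_super_strict_Cons[OF assms(1,2)]
  have "hd0 \<rho> + 2 \<le> a" using ss(4) assms(3) by (cases "\<rho> = []") (auto simp: hd0_def)
  then obtain d where d: "a - hd0 \<rho> - 1 = Suc d" by (cases "a - hd0 \<rho> - 1") auto
  have "butlast (butlast (tl (border (a # \<rho>)))) = border_prefix \<rho> @ replicate d East"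
    using ss(5) d by (simp add: tl_border_Cons butlast_append replicate_append_same[symmetric])
  thus ?thesis using d
    by (simp add: Theta_def tokens_append[OF east_ne_border_prefix[OF ss(1,2)]] tokens_replicate_East)
qed

lemma Theta_Cons_E:
  assumes "is_partition (a # \<rho>)" "super_strict (a # \<rho>)" "hd0 \<rho> + 3 \<le> a"
  shows "Theta (a # \<rho>) = Theta ((a - 1) # \<rho>) @ [OpE]"
proof -
  have "is_partition ((a - 1) # \<rho>)" "super_strict ((a - 1) # \<rho>)"
    using assms by (cases \<rho>; auto simp: hd0_def is_partition_Cons_iff super_strict_Cons_iff)+
  moreover have "a - hd0 \<rho> - 2 = Suc (a - 1 - hd0 \<rho> - 2)" using assms(3) by linarith
  hence "replicate (a - hd0 \<rho> - 2) OpE = replicate (a - 1 - hd0 \<rho> - 2) OpE @ [OpE]"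
    by (simp only: replicate_Suc replicate_append_same)
  ultimately show ?thesis using assms by (simp add: Theta_Cons)
qed

lemma Theta_Cons_N:
  assumes "is_partition (b # \<rho>)" "super_strict (b # \<rho>)"
  shows "Theta (Suc (Suc b) # b # \<rho>) = Theta (Suc b # \<rho>) @ [OpN]"
proof -
  note ss = partition_super_strict_Cons[OF assms]
  have "is_partition (Suc (Suc b) # b # \<rho>)" "super_strict (Suc (Suc b) # b # \<rho>)"
    "is_partition (Suc b # \<rho>)" "super_strict (Suc b # \<rho>)"
    using assms by (auto simp: is_partition_Cons_iff super_strict_Cons_iff)
  note ext = this
  have "Theta (Suc (Suc b) # b # \<rho>) = tokens (border_prefix (b # \<rho>))"
    using Theta_Cons[OF ext(1,2)] by (simp add: hd0_def)
  also have "border_prefix (b # \<rho>) = border_prefix \<rho> @ replicate (b - hd0 \<rho> - 1) East @ [North, East]"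
    using ss(5) by (simp add: border_prefix_def[of "b # \<rho>"] tl_border_Cons)
  also have "tokens \<dots> = tokens (border_prefix \<rho>) @ replicate (b - hd0 \<rho> - 1) OpE @ [OpN]"
    by (simp add: tokens_append[OF east_ne_border_prefix[OF ss(1,2)]] tokens_replicate_East_NE)
  also have "\<dots> = Theta (Suc b # \<rho>) @ [OpN]"
    using Theta_Cons[OF ext(3,4)] ss(3) by simp
  finally show ?thesis .
qed


section \<open>The base case \<open>\<mu> = (2)\<close> and the main theorem\<close>

lemma contains_singleton_iff:
  assumes "is_partition \<alpha>" "\<alpha> \<noteq> []" "0 < s"
  shows "contains \<alpha> [s] \<longleftrightarrow> s \<le> hd \<alpha>"
  using contains_Cons_iff[OF assms(1,2), of s "[]"] assms(3) by (simp add: strict_pos_def hosts_def)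

lemma of_weight_AvSet_1: "of_weight (AvSet [1]) k = {}"
  using contains_singleton_iff partition_nonempty partition_hd_pos
  by (fastforce simp: of_weight_def AvSet_def avoids_def Suc_le_eq)

lemma of_weight_QSet_1_2: "of_weight (QSet [1] [2]) k = (if k = 0 then {} else {replicate k 1})"
proof -
  have "\<alpha> \<in> of_weight (QSet [1] [2]) k \<longleftrightarrow> 0 < k \<and> \<alpha> = replicate k 1" for \<alpha>
  proof
    assume "\<alpha> \<in> of_weight (QSet [1] [2]) k"
    hence p: "is_partition \<alpha>" "\<alpha> \<noteq> []" "weight \<alpha> = k" "0 < k" "\<not> contains \<alpha> [2]"
      using partition_nonempty by (auto simp: of_weight_def QSet_def avoids_def)
    have "hd \<alpha> < 2" using contains_singleton_iff[OF p(1,2), of 2] p(5) by simp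
    have "\<forall>x\<in>set \<alpha>. x = 1"
    proof
      fix x assume x: "x \<in> set \<alpha>"
      hence "0 < x" using p(1) by (auto simp: is_partition_def intro: gr0I)
      moreover have "x \<le> hd \<alpha>" by (rule partition_le_hd[OF p(1) x])
      ultimately show "x = 1" using \<open>hd \<alpha> < 2\<close> by linarith
    qed
    hence rep: "\<alpha> = replicate (length \<alpha>) 1" by (simp add: replicate_length_same)
    moreover have "weight \<alpha> = length \<alpha>" by (subst (1) rep) (simp add: weight_def sum_list_replicate)
    ultimately show "0 < k \<and> \<alpha> = replicate k 1" using p(3,4) by simp
  next
    assume "0 < k \<and> \<alpha> = replicate k 1"
    moreover have "is_partition (replicate k (1::nat))" by (simp add: is_partition_def)
    ultimately show "\<alpha> \<in> of_weight (QSet [1] [2]) k"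
      using contains_singleton_iff[of \<alpha> 1] contains_singleton_iff[of \<alpha> 2]
      by (auto simp: of_weight_def QSet_def avoids_def weight_def sum_list_replicate)
  qed
  thus ?thesis by auto
qed

lemma Fsplit_1_2: "Fsplit [1] [2] = Tvar * fps_X * inv1 (1 - Tvar * fps_X)"
proof -
  have F: "Fsplit [1] [2] $ k = (if k = 0 then 0 else monom 1 k)" for k
  proof (cases "k = 0")
    case False
    have "mlarge (replicate k (1::nat)) = k" using False by (simp add: mlarge_def)
    thus ?thesis using False
      unfolding Fsplit_def fps_add_nth at_t1_Fser Fser_nth of_weight_AvSet_1 of_weight_QSet_1_2 by simp
  qed (unfold Fsplit_def fps_add_nth at_t1_Fser Fser_nth of_weight_AvSet_1 of_weight_QSet_1_2, simp)
  have "Fsplit [1] [2] * (1 - Tvar * fps_X) = Tvar * fps_X"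
  proof (rule fps_ext)
    fix k
    have l: "(Fsplit [1] [2] * (1 - Tvar * fps_X)) $ k = Fsplit [1] [2] $ k - (Fsplit [1] [2] * (Tvar * fps_X)) $ k"
      by (simp add: right_diff_distrib)
    have r: "(Tvar * fps_X) $ k = ((1 :: bser) * (Tvar * fps_X)) $ k" by simp
    show "(Fsplit [1] [2] * (1 - Tvar * fps_X)) $ k = (Tvar * fps_X) $ k"
      unfolding l r fps_nth_mult_Tvar_X F
      by (cases k; cases "k - 1") (simp_all add: monom_Suc monom_0 one_pCons)
  qed
  thus ?thesis by (rule mult_div_inv1[symmetric]) simp
qed

lemma apply_Theta_snoc: "apply_Theta (xs @ [p]) G = apply_op p (apply_Theta xs G)"
  by (simp add: apply_Theta_def)

lemma apply_Theta_Theta: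
  assumes "is_partition (Suc t # \<rho>)" "super_strict (Suc t # \<rho>)" "0 < t"
  shows "apply_Theta (Theta (Suc t # \<rho>)) (Tvar * fps_X * inv1 (1 - Tvar * fps_X)) = Fsplit (t # \<rho>) (Suc t # \<rho>)"
  using assms
proof (induction "t + weight \<rho>" arbitrary: t \<rho> rule: less_induct)
  case less
  note ss = partition_super_strict_Cons[OF less.prems(1,2)]
  have "\<rho> = [] \<and> t = 1 \<or> (\<exists>b \<rho>'. \<rho> = b # \<rho>' \<and> t = Suc b) \<or> hd0 \<rho> + 2 \<le> t \<and> 1 < t"
  proof (cases \<rho>)
    case (Cons b \<rho>')
    thus ?thesis using ss(4) by (cases "t = Suc b") (auto simp: hd0_def)
  qed (use less.prems(3) in \<open>auto simp: hd0_def\<close>)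
  then consider "\<rho> = []" "t = 1" | b \<rho>' where "\<rho> = b # \<rho>'" "t = Suc b" | "hd0 \<rho> + 2 \<le> t" "1 < t"
    by blast
  thus ?case
  proof cases
    case 1
    hence "Suc t # \<rho> = [2]" "t # \<rho> = [1]" by simp_all
    moreover have "Theta [2] = []" by (simp add: Theta_def border_def numeral_eq_Suc)
    ultimately show ?thesis by (simp only: apply_Theta_def foldl_Nil Fsplit_1_2)
  next
    case (2 b \<rho>')
    have p: "is_partition (b # \<rho>')" "super_strict (b # \<rho>')" using ss(1,2) 2(1) by simp_all
    note pb = partition_super_strict_Cons[OF p]
    have "hd0 \<rho>' + 2 \<le> Suc b" using pb(3,4) by (cases "\<rho>' = []") (auto simp: hd0_def)
    note p' = partition_super_strict_ConsI[OF pb(1,2) this]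
    have IH: "apply_Theta (Theta (Suc b # \<rho>')) (Tvar * fps_X * inv1 (1 - Tvar * fps_X)) = Fsplit (b # \<rho>') (Suc b # \<rho>')"
      using less.hyps[of b \<rho>'] p' 2 pb(3) by (simp add: weight_def)
    have "strict_pos (b # \<rho>')" by (rule strict_pos_Cons_super_strict[OF pb(1,2,5)])
    thus ?thesis using 2 Theta_Cons_N[OF p] IH by (simp add: apply_Theta_snoc apply_op_def opN_Fsplit)
  next
    case 3
    then obtain t' where t': "t = Suc t'" "0 < t'" by (cases t) auto
    have "is_partition (Suc t' # \<rho>)" "super_strict (Suc t' # \<rho>)"
      using partition_super_strict_ConsI[OF ss(1,2)] 3 t' by simp_all
    hence IH: "apply_Theta (Theta (Suc t' # \<rho>)) (Tvar * fps_X * inv1 (1 - Tvar * fps_X)) = Fsplit (t' # \<rho>) (Suc t' # \<rho>)"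
      using less.hyps[of t' \<rho>] t' by simp
    have "strict_pos (t' # \<rho>)" using 3 t' by (intro strict_pos_Cons_super_strict[OF ss(1,2)]) simp
    thus ?thesis using 3 t' Theta_Cons_E[OF less.prems(1,2)] IH
      by (simp add: apply_Theta_snoc apply_op_def opE_Fsplit)
  qed
qed

lemma at_t1_Fsplit:
  "at_t1 (Fsplit \<tau> \<mu>) $ n = [:int (card (of_weight (AvSet \<tau>) n) + card (of_weight (QSet \<tau> \<mu>) n)):]"
  by (simp add: at_t1_def Fsplit_def at_t1_Fser Fser_nth poly_sum poly_monom)

lemma at_t1_Fser_AvSet:
  "at_t1 (Fser (AvSet \<mu>)) = Abs_fps (\<lambda>n. if n = 0 then 0 else [:int (card (Av n \<mu>)):])"
proof (rule fps_ext)
  fix n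
  have "of_weight (AvSet \<mu>) n = (if n = 0 then {} else Av n \<mu>)"
    by (auto simp: of_weight_def AvSet_def Av_def)
  thus "at_t1 (Fser (AvSet \<mu>)) $ n = Abs_fps (\<lambda>n. if n = 0 then 0 else [:int (card (Av n \<mu>)):]) $ n"
    by (simp add: at_t1_Fser)
qed

theorem mainTheorem1:
  fixes \<mu> :: "nat list"
  assumes "is_partition \<mu>" and "super_strict \<mu>" and "weight \<mu> \<ge> 2"
  defines "\<tau> \<equiv> (hd \<mu> - 1) # tl \<mu>"
  shows "apply_Theta (Theta \<mu>) (Tvar * fps_X * inv1 (1 - Tvar * fps_X))
           = at_t1 (Fser (AvSet \<tau>)) + Fser (QSet \<tau> \<mu>)
      \<and> at_t1 (Fser (AvSet \<mu>)) = at_t1 (apply_Theta (Theta \<mu>) (Tvar * fps_X * inv1 (1 - Tvar * fps_X)))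
      \<and> at_t1 (apply_Theta (Theta \<mu>) (Tvar * fps_X * inv1 (1 - Tvar * fps_X)))
           = Abs_fps (\<lambda>n. if n = 0 then 0 else [:int (card (Av n \<mu>)) :])"
proof -
  obtain a \<rho> where \<mu>: "\<mu> = a # \<rho>" using assms(3) by (cases \<mu>) (auto simp: weight_def)
  note ss = partition_super_strict_Cons[OF assms(1,2)[unfolded \<mu>]]
  have "hd0 \<rho> + 2 \<le> a" using ss(4) assms(3) \<mu> by (cases "\<rho> = []") (auto simp: weight_def hd0_def)
  then obtain t where t: "a = Suc t" "hd0 \<rho> < t" by (cases a) auto
  have \<tau>: "\<tau> = t # \<rho>" by (simp add: \<tau>_def \<mu> t)
  have "apply_Theta (Theta \<mu>) (Tvar * fps_X * inv1 (1 - Tvar * fps_X)) = Fsplit \<tau> \<mu>"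
    using apply_Theta_Theta assms(1,2) t by (simp add: \<mu> \<tau>)
  moreover have "at_t1 (Fsplit \<tau> \<mu>) = at_t1 (Fser (AvSet \<mu>))"
  proof (rule fps_ext)
    fix n
    have "strict_pos \<tau>" unfolding \<tau> by (rule strict_pos_Cons_super_strict[OF ss(1,2) t(2)])
    hence "card (of_weight (AvSet \<mu>) n) = card (of_weight (AvSet \<tau>) n) + card (of_weight (QSet \<tau> \<mu>) n)"
      using contains_Cons_Suc_imp by (intro card_of_weight_AvSet_split) (simp add: \<mu> \<tau> t)
    thus "at_t1 (Fsplit \<tau> \<mu>) $ n = at_t1 (Fser (AvSet \<mu>)) $ n" by (simp add: at_t1_Fsplit at_t1_Fser)
  qed
  ultimately show ?thesis by (simp add: Fsplit_def at_t1_Fser_AvSet)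
qed

end
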